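(* Let $A\subseteq\omega$ be a c.e. set of density $1$. Then the following are equivalent: (i) $A$ has a computable subset $B$ of density $1$; (ii) there is a function $w\le_T\emptyset'$ which witnesses that $A$ has density $1$.
   Context: For $S\subseteq\omega$ and $n>0$, $\rho_n(S)=|S\cap[0,n)|/n$; $S$ has density $1$ if $\lim_n\rho_n(S)=1$. A function $w:\omega\to\omega$ witnesses that $A$ has density $1$ if for all $k$ and all $n\ge w(k)$, $\rho_n(A)\ge1-2^{-k}$. *)

theory Defs
  imports Complex_Main "HOL-Library.Nat_Bijection"
begin

datatype recf =
    Rz
  | Rs
  | Rid nat
  | Rcn recf "recf list"
  | Rpr recf recf           \<comment> \<open>primitive recursion on first argument\<close>
  | Rmn recf
  | Ror                     \<comment> \<open>oracle query on first argument\<close>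

inductive eval :: "(nat \<Rightarrow> nat) \<Rightarrow> recf \<Rightarrow> nat list \<Rightarrow> nat \<Rightarrow> bool" for g where
  eval_Z: "eval g Rz xs 0"
| eval_S: "eval g Rs (x # xs) (Suc x)"
| eval_Id: "i < length xs \<Longrightarrow> eval g (Rid i) xs (xs ! i)"
| eval_Cn: "length ys = length hs \<Longrightarrow> (\<forall>i < length hs. eval g (hs ! i) xs (ys ! i))
             \<Longrightarrow> eval g f ys z \<Longrightarrow> eval g (Rcn f hs) xs z"
| eval_Pr0: "eval g f xs y \<Longrightarrow> eval g (Rpr f h) (0 # xs) y"
| eval_PrS: "eval g (Rpr f h) (n # xs) y \<Longrightarrow> eval g h (n # y # xs) z
             \<Longrightarrow> eval g (Rpr f h) (Suc n # xs) z"
| eval_Mn: "eval g f (n # xs) 0 \<Longrightarrow> (\<forall>m < n. \<exists>y. eval g f (m # xs) y \<and> y \<noteq> 0)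
             \<Longrightarrow> eval g (Rmn f) xs n"
| eval_Or: "eval g Ror (x # xs) (g x)"

fun enc :: "recf \<Rightarrow> nat" where
  "enc Rz = prod_encode (0, 0)"
| "enc Rs = prod_encode (1, 0)"
| "enc (Rid i) = prod_encode (2, i)"
| "enc (Rcn f hs) = prod_encode (3, prod_encode (enc f, list_encode (map enc hs)))"
| "enc (Rpr f h) = prod_encode (4, prod_encode (enc f, enc h))"
| "enc (Rmn f) = prod_encode (5, enc f)"
| "enc Ror = prod_encode (6, 0)"

definition chi :: "nat set \<Rightarrow> nat \<Rightarrow> nat" where
  "chi X x = (if x \<in> X then 1 else 0)"

definition computable_rel :: "(nat \<Rightarrow> nat) \<Rightarrow> (nat \<Rightarrow> nat) \<Rightarrow> bool" where
  "computable_rel g h \<longleftrightarrow> (\<exists>f. \<forall>x. eval g f [x] (h x))"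

definition computable :: "(nat \<Rightarrow> nat) \<Rightarrow> bool" where
  "computable h \<longleftrightarrow> computable_rel (\<lambda>_. 0) h"

definition computable_set :: "nat set \<Rightarrow> bool" where
  "computable_set X \<longleftrightarrow> computable (chi X)"

definition ce :: "nat set \<Rightarrow> bool" where
  "ce X \<longleftrightarrow> (\<exists>f. \<forall>x. x \<in> X \<longleftrightarrow> (\<exists>y. eval (\<lambda>_. 0) f [x] y))"

definition halting_set :: "nat set" where
  "halting_set = {e. \<exists>f y. enc f = e \<and> eval (\<lambda>_. 0) f [e] y}"

definition turing_le :: "(nat \<Rightarrow> nat) \<Rightarrow> nat set \<Rightarrow> bool" where
  "turing_le h X \<longleftrightarrow> computable_rel (chi X) h"

definition rho :: "nat \<Rightarrow> nat set \<Rightarrow> real" where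
  "rho n S = real (card (S \<inter> {0..<n})) / real n"

definition has_density_one :: "nat set \<Rightarrow> bool" where
  "has_density_one S \<longleftrightarrow> (\<lambda>n. rho n S) \<longlonglongrightarrow> 1"

definition witnesses_density_one :: "(nat \<Rightarrow> nat) \<Rightarrow> nat set \<Rightarrow> bool" where
  "witnesses_density_one w A \<longleftrightarrow>
     (\<forall>k n. n > 0 \<longrightarrow> n \<ge> w k \<longrightarrow> rho n A \<ge> 1 - 1 / 2 ^ k)"

end

theory Submission
  imports Defs
begin

text \<open>(i) \<Longrightarrow> (ii): for a computable B \<subseteq> A of density 1, "rho_N(B) < 1 -
  2^-k for some N \<ge> m" is a computably enumerable property of (m, k), so the halting set
  can find the least m for which it fails; this m bounds the density deficits of B, hence of
  A, at precision k.

  (ii) \<Longrightarrow> (i): approximate w by running its reduction with the stage-s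
  approximation of the halting set, and enumerate A. On the segment [0, 2^(m+1)) let B agree
  with the stage-s enumeration of A for the least s \<ge> m at which every k \<le> m whose
  approximate witnesses w_s(0), ..., w_s(k) lie below 2^(m+1) sees at most a 2^-k fraction of
  the segment missing. Both approximations converge, so such stages exist and B is a
  computable subset of A. Once w_s(0..K) has settled and 2^(m+1) exceeds w(0), ..., w(K), all
  further segments miss at most a 2^-K fraction; as the segments grow geometrically, B has
  density 1.

  Computability is established by arithmetising eval: a computation is certified by a coded
  list of judgments, each following from earlier ones by one rule of eval, and checking such a
  certificate is recursive in the oracle.\<close>

section \<open>Functions recursive in an oracle\<close>

definition recursive_in :: "(nat \<Rightarrow> nat) \<Rightarrow> nat \<Rightarrow> (nat list \<Rightarrow> nat) \<Rightarrow> bool" where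
  "recursive_in g n F \<longleftrightarrow> (\<exists>p. \<forall>xs. length xs = n \<longrightarrow> eval g p xs (F xs))"

definition decidable_in :: "(nat \<Rightarrow> nat) \<Rightarrow> nat \<Rightarrow> (nat list \<Rightarrow> bool) \<Rightarrow> bool" where
  "decidable_in g n P \<longleftrightarrow> recursive_in g n (\<lambda>xs. if P xs then 1 else 0)"

named_theorems recursive_in_intros

primrec const_prog :: "nat \<Rightarrow> recf" where
  "const_prog 0 = Rz"
| "const_prog (Suc c) = Rcn Rs [const_prog c]"

lemma eval_const_prog: "eval g (const_prog c) xs c"
proof (induction c)
  case 0 then show ?case by (simp add: eval_Z)
next
  case (Suc c)
  have "eval g Rs [c] (Suc c)" by (rule eval_S)
  then show ?case using Suc by (auto intro!: eval_Cn[where ys="[c]"])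
qed

lemma recursive_in_cong:
  "recursive_in g n F \<Longrightarrow> (\<And>xs. length xs = n \<Longrightarrow> F xs = G xs) \<Longrightarrow> recursive_in g n G"
  unfolding recursive_in_def by metis

lemma recursive_in_cong_unary:
  assumes "recursive_in g 1 F" "\<And>a. F [a] = G [a]"
  shows "recursive_in g 1 G"
  using assms(1)
proof (rule recursive_in_cong)
  fix xs :: "nat list" assume "length xs = 1"
  then obtain a where "xs = [a]" by (cases xs) auto
  then show "F xs = G xs" using assms(2) by simp
qed

lemma recursive_in_cong_binary:
  assumes "recursive_in g 2 F" "\<And>a b. F [a, b] = G [a, b]"
  shows "recursive_in g 2 G"
  using assms(1)
proof (rule recursive_in_cong)
  fix xs :: "nat list" assume "length xs = 2"
  then obtain a b where "xs = [a, b]" by (cases xs; cases "tl xs") (auto simp: numeral_2_eq_2)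
  then show "F xs = G xs" using assms(2) by simp
qed

lemma recursive_in_const [recursive_in_intros]: "recursive_in g n (\<lambda>xs. c)"
  unfolding recursive_in_def using eval_const_prog by blast

lemma recursive_in_proj [recursive_in_intros]: "i < n \<Longrightarrow> recursive_in g n (\<lambda>xs. xs ! i)"
  unfolding recursive_in_def by (auto intro: eval_Id)

lemma recursive_in_unary_iff_computable_rel:
  "recursive_in g 1 (\<lambda>xs. h (xs!0)) \<longleftrightarrow> computable_rel g h"
proof
  assume "recursive_in g 1 (\<lambda>xs. h (xs!0))"
  then obtain p where "\<forall>xs. length xs = 1 \<longrightarrow> eval g p xs (h (xs!0))" unfolding recursive_in_def
    by blast
  then have "eval g p [x] (h x)" for x by (metis One_nat_def length_Cons list.size(3) nth_Cons_0)
  then show "computable_rel g h" unfolding computable_rel_def by blast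
next
  assume "computable_rel g h"
  then obtain p where p: "\<forall>x. eval g p [x] (h x)" unfolding computable_rel_def by blast
  show "recursive_in g 1 (\<lambda>xs. h (xs!0))" unfolding recursive_in_def
  proof (intro exI allI impI)
    fix xs :: "nat list" assume "length xs = 1"
    then obtain x where "xs = [x]" by (cases xs) auto
    then show "eval g p xs (h (xs!0))" using p by simp
  qed
qed

lemma recursive_in_Suc_unary: "recursive_in g 1 (\<lambda>xs. Suc (xs ! 0))"
  unfolding recursive_in_unary_iff_computable_rel computable_rel_def
  by (rule exI[of _ Rs]) (simp add: eval_S)

lemma recursive_in_oracle_unary: "recursive_in g 1 (\<lambda>xs. g (xs ! 0))"
  unfolding recursive_in_unary_iff_computable_rel computable_rel_def
  by (rule exI[of _ Ror]) (simp add: eval_Or)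

lemma recursive_in_compose:
  assumes "recursive_in g (length Hs) G" and "\<forall>H\<in>set Hs. recursive_in g n H"
  shows "recursive_in g n (\<lambda>xs. G (map (\<lambda>H. H xs) Hs))"
proof -
  obtain pG where pG: "\<forall>xs. length xs = length Hs \<longrightarrow> eval g pG xs (G xs)"
    using assms(1) unfolding recursive_in_def by blast
  have "\<forall>i<length Hs. \<exists>p. \<forall>xs. length xs = n \<longrightarrow> eval g p xs ((Hs!i) xs)"
    using assms(2) unfolding recursive_in_def by auto
  then obtain P where P: "\<forall>i<length Hs. \<forall>xs. length xs = n \<longrightarrow> eval g (P i) xs ((Hs!i) xs)"
    by metis
  show ?thesis unfolding recursive_in_def
  proof (intro exI allI impI)
    fix xs :: "nat list" assume len: "length xs = n"
    show "eval g (Rcn pG (map P [0..<length Hs])) xs (G (map (\<lambda>H. H xs) Hs))"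
      by (rule eval_Cn[where ys="map (\<lambda>H. H xs) Hs"]) (use pG P len in auto)
  qed
qed

lemma recursive_in_comp_unary:
  assumes "recursive_in g 1 (\<lambda>xs. G (xs!0))" "recursive_in g n F"
  shows "recursive_in g n (\<lambda>xs. G (F xs))"
  using recursive_in_compose[of g "[F]" "\<lambda>xs. G (xs!0)" n] assms by simp

lemma recursive_in_comp_binary:
  assumes "recursive_in g 2 (\<lambda>xs. G (xs!0) (xs!1))" "recursive_in g n F1" "recursive_in g n F2"
  shows "recursive_in g n (\<lambda>xs. G (F1 xs) (F2 xs))"
  using recursive_in_compose[of g "[F1,F2]" "\<lambda>xs. G (xs!0) (xs!1)" n] assms
  by (simp add: numeral_2_eq_2)

lemma recursive_in_comp_ternary:
  assumes "recursive_in g 3 (\<lambda>xs. G (xs!0) (xs!1) (xs!2))"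
    "recursive_in g n F1" "recursive_in g n F2" "recursive_in g n F3"
  shows "recursive_in g n (\<lambda>xs. G (F1 xs) (F2 xs) (F3 xs))"
  using recursive_in_compose[of g "[F1,F2,F3]" "\<lambda>xs. G (xs!0) (xs!1) (xs!2)" n] assms
  by (simp add: numeral_3_eq_3)

fun prim_rec :: "(nat list \<Rightarrow> nat) \<Rightarrow> (nat list \<Rightarrow> nat) \<Rightarrow> nat \<Rightarrow> nat list \<Rightarrow> nat" where
  "prim_rec F H 0 ys = F ys"
| "prim_rec F H (Suc m) ys = H (m # prim_rec F H m ys # ys)"

lemma recursive_in_prim_rec:
  assumes "recursive_in g n F" "recursive_in g (Suc (Suc n)) H"
  shows "recursive_in g (Suc n) (\<lambda>xs. prim_rec F H (hd xs) (tl xs))"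
proof -
  obtain pF where pF: "\<forall>xs. length xs = n \<longrightarrow> eval g pF xs (F xs)"
    using assms(1) unfolding recursive_in_def by blast
  obtain pH where pH: "\<forall>xs. length xs = Suc (Suc n) \<longrightarrow> eval g pH xs (H xs)"
    using assms(2) unfolding recursive_in_def by blast
  have *: "eval g (Rpr pF pH) (m # ys) (prim_rec F H m ys)" if "length ys = n" for m ys
  proof (induction m)
    case 0 then show ?case using pF that by (simp add: eval_Pr0)
  next
    case (Suc m) then show ?case using pH that by (auto intro: eval_PrS)
  qed
  show ?thesis unfolding recursive_in_def
  proof (intro exI allI impI)
    fix xs :: "nat list" assume "length xs = Suc n"
    then obtain m ys where "xs = m # ys" "length ys = n" by (metis length_Suc_conv)
    then show "eval g (Rpr pF pH) xs (prim_rec F H (hd xs) (tl xs))" using * by simp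
  qed
qed

lemma recursive_in_minimize:
  assumes "recursive_in g (Suc n) F" "\<And>ys. length ys = n \<Longrightarrow> \<exists>m. F (m # ys) = 0"
  shows "recursive_in g n (\<lambda>ys. LEAST m. F (m # ys) = 0)"
proof -
  obtain pF where pF: "\<forall>xs. length xs = Suc n \<longrightarrow> eval g pF xs (F xs)"
    using assms(1) unfolding recursive_in_def by blast
  show ?thesis unfolding recursive_in_def
  proof (intro exI allI impI)
    fix ys :: "nat list" assume len: "length ys = n"
    define k where "k = (LEAST m. F (m # ys) = 0)"
    have k0: "F (k # ys) = 0" unfolding k_def by (rule LeastI_ex) (rule assms(2)[OF len])
    have kl: "\<forall>m<k. F (m # ys) \<noteq> 0" unfolding k_def by (auto dest: not_less_Least)
    show "eval g (Rmn pF) ys (LEAST m. F (m # ys) = 0)"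
      unfolding k_def[symmetric]
      using pF len k0 kl by (intro eval_Mn) (metis length_Cons)+
  qed
qed

lemma recursive_in_subst_hd:
  assumes "recursive_in g (Suc n) (\<lambda>ys. F (hd ys) (tl ys))" "recursive_in g n B"
  shows "recursive_in g n (\<lambda>xs. F (B xs) xs)"
proof -
  let ?Hs = "B # map (\<lambda>i xs. xs ! i) [0..<n]"
  have composed: "recursive_in g n (\<lambda>xs. (\<lambda>ys. F (hd ys) (tl ys)) (map (\<lambda>H. H xs) ?Hs))"
    by (rule recursive_in_compose) (use assms recursive_in_proj in auto)
  have args_eq: "map (\<lambda>i. xs ! i) [0..<n] = xs" if "length xs = n" for xs :: "nat list"
    using that map_nth[of xs] by simp
  show ?thesis by (rule recursive_in_cong[OF composed]) (simp add: args_eq comp_def)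
qed

lemma recursive_in_lift:
  assumes "recursive_in g n F"
  shows "recursive_in g (Suc n) (\<lambda>ys. F (tl ys))"
proof -
  let ?Hs = "map (\<lambda>i xs. xs ! Suc i) [0..<n]"
  have composed: "recursive_in g (Suc n) (\<lambda>xs. F (map (\<lambda>H. H xs) ?Hs))"
    by (rule recursive_in_compose) (use assms recursive_in_proj in auto)
  have args_eq: "map (\<lambda>i. xs ! Suc i) [0..<n] = tl xs" if "length xs = Suc n" for xs :: "nat list"
    using that by (intro nth_equalityI) (auto simp: nth_tl)
  show ?thesis by (rule recursive_in_cong[OF composed]) (simp add: args_eq comp_def)
qed

lemma recursive_in_drop_second:
  assumes "recursive_in g (Suc n) (\<lambda>ys. F (hd ys) (tl ys))"
  shows "recursive_in g (Suc (Suc n)) (\<lambda>zs. F (hd zs) (tl (tl zs)))"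
proof -
  let ?Hs = "(\<lambda>xs. xs ! 0) # map (\<lambda>i xs. xs ! Suc (Suc i)) [0..<n]"
  have composed: "recursive_in g (Suc (Suc n)) (\<lambda>xs. (\<lambda>ys. F (hd ys) (tl ys)) (map (\<lambda>H. H xs) ?Hs))"
    by (rule recursive_in_compose) (use assms recursive_in_proj in auto)
  have args_eq: "map (\<lambda>i. xs ! Suc (Suc i)) [0..<n] = tl (tl xs)"
    if "length xs = Suc (Suc n)" for xs :: "nat list"
    using that by (intro nth_equalityI) (auto simp: nth_tl)
  have hd_eq: "xs ! 0 = hd xs" if "length xs = Suc (Suc n)" for xs :: "nat list"
    using that by (cases xs) auto
  show ?thesis by (rule recursive_in_cong[OF composed]) (simp add: args_eq hd_eq comp_def)
qed

text \<open>Argument selectors in the shapes produced by nested bounded quantifiers and minimisation.\<close>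

lemma recursive_in_hd [recursive_in_intros]: "0 < n \<Longrightarrow> recursive_in g n (\<lambda>xs. hd xs)"
  by (rule recursive_in_cong[OF recursive_in_proj[of 0]]) (auto simp: hd_conv_nth)

lemma recursive_in_hd_tl [recursive_in_intros]: "Suc 0 < n \<Longrightarrow> recursive_in g n (\<lambda>xs. hd (tl xs))"
  by (rule recursive_in_cong[OF recursive_in_proj[of "Suc 0"]], assumption)
    (case_tac xs; case_tac "tl xs"; auto)

lemma recursive_in_hd_tl2 [recursive_in_intros]:
  "Suc (Suc 0) < n \<Longrightarrow> recursive_in g n (\<lambda>xs. hd (tl (tl xs)))"
  by (rule recursive_in_cong[OF recursive_in_proj[of "Suc (Suc 0)"]], assumption)
    (case_tac xs; case_tac "tl xs"; case_tac "tl (tl xs)"; auto)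

lemma recursive_in_hd_tl3 [recursive_in_intros]:
  "Suc (Suc (Suc 0)) < n \<Longrightarrow> recursive_in g n (\<lambda>xs. hd (tl (tl (tl xs))))"
  by (rule recursive_in_cong[OF recursive_in_proj[of "Suc (Suc (Suc 0))"]], assumption)
    (case_tac xs; case_tac "tl xs"; case_tac "tl (tl xs)"; case_tac "tl (tl (tl xs))"; auto)

lemma recursive_in_hd_tl4 [recursive_in_intros]:
  "Suc (Suc (Suc (Suc 0))) < n \<Longrightarrow> recursive_in g n (\<lambda>xs. hd (tl (tl (tl (tl xs)))))"
  by (rule recursive_in_cong[OF recursive_in_proj[of "Suc (Suc (Suc (Suc 0)))"]], assumption)
    (case_tac xs; case_tac "tl xs"; case_tac "tl (tl xs)"; case_tac "tl (tl (tl xs))";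
     case_tac "tl (tl (tl (tl xs)))"; auto)

lemma recursive_in_tl_nth [recursive_in_intros]: "Suc i < n \<Longrightarrow> recursive_in g n (\<lambda>xs. tl xs ! i)"
  by (rule recursive_in_cong[OF recursive_in_proj[of "Suc i"]]) (auto simp: nth_tl)

lemma recursive_in_tl2_nth [recursive_in_intros]:
  "Suc (Suc i) < n \<Longrightarrow> recursive_in g n (\<lambda>xs. tl (tl xs) ! i)"
  by (rule recursive_in_cong[OF recursive_in_proj[of "Suc (Suc i)"]]) (auto simp: nth_tl)

lemma recursive_in_tl3_nth [recursive_in_intros]:
  "Suc (Suc (Suc i)) < n \<Longrightarrow> recursive_in g n (\<lambda>xs. tl (tl (tl xs)) ! i)"
  by (rule recursive_in_cong[OF recursive_in_proj[of "Suc (Suc (Suc i))"]]) (auto simp: nth_tl)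

lemma recursive_in_tl4_nth [recursive_in_intros]:
  "Suc (Suc (Suc (Suc i))) < n \<Longrightarrow> recursive_in g n (\<lambda>xs. tl (tl (tl (tl xs))) ! i)"
  by (rule recursive_in_cong[OF recursive_in_proj[of "Suc (Suc (Suc (Suc i)))"]])
    (auto simp: nth_tl)

lemma recursive_in_tl5_nth [recursive_in_intros]:
  "Suc (Suc (Suc (Suc (Suc i)))) < n \<Longrightarrow> recursive_in g n (\<lambda>xs. tl (tl (tl (tl (tl xs)))) ! i)"
  by (rule recursive_in_cong[OF recursive_in_proj[of "Suc (Suc (Suc (Suc (Suc i))))"]])
    (auto simp: nth_tl)

lemma recursive_in_Suc [recursive_in_intros]:
  "recursive_in g n F \<Longrightarrow> recursive_in g n (\<lambda>xs. Suc (F xs))"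
  by (rule recursive_in_comp_unary[OF recursive_in_Suc_unary])

lemma recursive_in_oracle [recursive_in_intros]:
  "recursive_in g n F \<Longrightarrow> recursive_in g n (\<lambda>xs. g (F xs))"
  by (rule recursive_in_comp_unary[OF recursive_in_oracle_unary])

lemma prim_rec_add: "prim_rec (\<lambda>ys. ys!0) (\<lambda>zs. Suc (zs!1)) a ys = a + ys!0"
  by (induction a) auto

lemma recursive_in_add_binary: "recursive_in g 2 (\<lambda>xs. xs!0 + xs!1)"
proof -
  have "recursive_in g (Suc (Suc 0)) (\<lambda>xs. prim_rec (\<lambda>ys. ys!0) (\<lambda>zs. Suc (zs!1)) (hd xs) (tl xs))"
    by (rule recursive_in_prim_rec) (auto intro!: recursive_in_intros)
  from this[folded numeral_2_eq_2] show ?thesis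
    by (rule recursive_in_cong_binary) (simp only: prim_rec_add, simp)
qed

lemma recursive_in_add [recursive_in_intros]:
  "recursive_in g n F \<Longrightarrow> recursive_in g n G \<Longrightarrow> recursive_in g n (\<lambda>xs. F xs + G xs)"
  by (rule recursive_in_comp_binary[OF recursive_in_add_binary])

lemma prim_rec_mult: "prim_rec (\<lambda>ys. 0) (\<lambda>zs. zs!1 + zs!2) a ys = a * ys!0"
  by (induction a) auto

lemma recursive_in_mult_binary: "recursive_in g 2 (\<lambda>xs. xs!0 * xs!1)"
proof -
  have "recursive_in g (Suc (Suc 0)) (\<lambda>xs. prim_rec (\<lambda>ys. 0) (\<lambda>zs. zs!1 + zs!2) (hd xs) (tl xs))"
    by (rule recursive_in_prim_rec) (auto intro!: recursive_in_intros)
  from this[folded numeral_2_eq_2] show ?thesis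
    by (rule recursive_in_cong_binary) (simp only: prim_rec_mult, simp)
qed

lemma recursive_in_mult [recursive_in_intros]:
  "recursive_in g n F \<Longrightarrow> recursive_in g n G \<Longrightarrow> recursive_in g n (\<lambda>xs. F xs * G xs)"
  by (rule recursive_in_comp_binary[OF recursive_in_mult_binary])

lemma prim_rec_pred: "prim_rec (\<lambda>ys. 0) (\<lambda>zs. zs!0) a ys = a - 1"
  by (induction a) auto

lemma recursive_in_pred_unary: "recursive_in g 1 (\<lambda>xs. xs!0 - 1)"
proof -
  have "recursive_in g (Suc 0) (\<lambda>xs. prim_rec (\<lambda>ys. 0) (\<lambda>zs. zs!0) (hd xs) (tl xs))"
    by (rule recursive_in_prim_rec) (auto intro!: recursive_in_intros)
  from this[folded One_nat_def] show ?thesis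
    by (rule recursive_in_cong_unary) (simp only: prim_rec_pred, simp)
qed

lemma prim_rec_diff: "prim_rec (\<lambda>ys. ys!0) (\<lambda>zs. zs!1 - 1) a ys = ys!0 - a"
  by (induction a) auto

lemma recursive_in_diff_binary: "recursive_in g 2 (\<lambda>xs. xs!1 - xs!0)"
proof -
  have "recursive_in g (Suc (Suc 0)) (\<lambda>xs. prim_rec (\<lambda>ys. ys!0) (\<lambda>zs. zs!1 - 1) (hd xs) (tl xs))"
    by (rule recursive_in_prim_rec) (rule recursive_in_proj, simp,
      rule recursive_in_comp_unary[OF recursive_in_pred_unary], rule recursive_in_proj, simp)
  from this[folded numeral_2_eq_2] show ?thesis
    by (rule recursive_in_cong_binary) (simp only: prim_rec_diff, simp)
qed

lemma recursive_in_diff [recursive_in_intros]: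
  "recursive_in g n F \<Longrightarrow> recursive_in g n G \<Longrightarrow> recursive_in g n (\<lambda>xs. F xs - G xs)"
  using recursive_in_comp_binary[OF recursive_in_diff_binary, of g n G F] by simp

lemma prim_rec_power: "prim_rec (\<lambda>ys. 1) (\<lambda>zs. zs!1 * zs!2) a ys = ys!0 ^ a"
  by (induction a) auto

lemma recursive_in_power_binary: "recursive_in g 2 (\<lambda>xs. xs!1 ^ xs!0)"
proof -
  have "recursive_in g (Suc (Suc 0)) (\<lambda>xs. prim_rec (\<lambda>ys. 1) (\<lambda>zs. zs!1 * zs!2) (hd xs) (tl xs))"
    by (rule recursive_in_prim_rec) (auto intro!: recursive_in_intros)
  from this[folded numeral_2_eq_2] show ?thesis
    by (rule recursive_in_cong_binary) (simp only: prim_rec_power, simp)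
qed

lemma recursive_in_power [recursive_in_intros]:
  "recursive_in g n F \<Longrightarrow> recursive_in g n G \<Longrightarrow> recursive_in g n (\<lambda>xs. F xs ^ G xs)"
  using recursive_in_comp_binary[OF recursive_in_power_binary, of g n G F] by simp

lemma prim_rec_triangle: "prim_rec (\<lambda>ys. 0) (\<lambda>zs. zs!1 + Suc (zs!0)) a ys = triangle a"
  by (induction a) auto

lemma recursive_in_triangle_unary: "recursive_in g 1 (\<lambda>xs. triangle (xs!0))"
proof -
  have "recursive_in g (Suc 0) (\<lambda>xs. prim_rec (\<lambda>ys. 0) (\<lambda>zs. zs!1 + Suc (zs!0)) (hd xs) (tl xs))"
    by (rule recursive_in_prim_rec) (auto intro!: recursive_in_intros)
  from this[folded One_nat_def] show ?thesis
    by (rule recursive_in_cong_unary) (simp only: prim_rec_triangle, simp)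
qed

lemma recursive_in_triangle [recursive_in_intros]:
  "recursive_in g n F \<Longrightarrow> recursive_in g n (\<lambda>xs. triangle (F xs))"
  by (rule recursive_in_comp_unary[OF recursive_in_triangle_unary])

lemma decidable_in_eq [recursive_in_intros]:
  "recursive_in g n F \<Longrightarrow> recursive_in g n G \<Longrightarrow> decidable_in g n (\<lambda>xs. F xs = G xs)"
  unfolding decidable_in_def
  by (rule recursive_in_cong[where F="\<lambda>xs. 1 - ((F xs - G xs) + (G xs - F xs))"])
    (auto intro!: recursive_in_intros)

lemma decidable_in_less [recursive_in_intros]:
  "recursive_in g n F \<Longrightarrow> recursive_in g n G \<Longrightarrow> decidable_in g n (\<lambda>xs. F xs < G xs)"
  unfolding decidable_in_def
  by (rule recursive_in_cong[where F="\<lambda>xs. 1 - (1 - (G xs - F xs))"])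
    (auto intro!: recursive_in_intros)

lemma decidable_in_le [recursive_in_intros]:
  "recursive_in g n F \<Longrightarrow> recursive_in g n G \<Longrightarrow> decidable_in g n (\<lambda>xs. F xs \<le> G xs)"
  unfolding decidable_in_def
  by (rule recursive_in_cong[where F="\<lambda>xs. 1 - (F xs - G xs)"]) (auto intro!: recursive_in_intros)

lemma decidable_in_not [recursive_in_intros]:
  "decidable_in g n P \<Longrightarrow> decidable_in g n (\<lambda>xs. \<not> P xs)"
  unfolding decidable_in_def
  by (rule recursive_in_cong[where F="\<lambda>xs. 1 - (if P xs then 1 else 0)"])
    (auto intro!: recursive_in_intros)

lemma decidable_in_conj [recursive_in_intros]:
  "decidable_in g n P \<Longrightarrow> decidable_in g n Q \<Longrightarrow> decidable_in g n (\<lambda>xs. P xs \<and> Q xs)"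
  unfolding decidable_in_def
  by (rule recursive_in_cong[where F="\<lambda>xs. (if P xs then 1 else 0) * (if Q xs then 1 else 0)"])
    (auto intro!: recursive_in_intros)

lemma decidable_in_disj [recursive_in_intros]:
  "decidable_in g n P \<Longrightarrow> decidable_in g n Q \<Longrightarrow> decidable_in g n (\<lambda>xs. P xs \<or> Q xs)"
  using decidable_in_not[OF decidable_in_conj[OF decidable_in_not decidable_in_not]] by simp

lemma decidable_in_imp [recursive_in_intros]:
  "decidable_in g n P \<Longrightarrow> decidable_in g n Q \<Longrightarrow> decidable_in g n (\<lambda>xs. P xs \<longrightarrow> Q xs)"
  using decidable_in_disj[OF decidable_in_not] by simp

lemma recursive_in_if [recursive_in_intros]:
  "decidable_in g n P \<Longrightarrow> recursive_in g n F \<Longrightarrow> recursive_in g n G \<Longrightarrow>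
   recursive_in g n (\<lambda>xs. if P xs then F xs else G xs)"
  unfolding decidable_in_def
  by (rule recursive_in_cong[where F="\<lambda>xs. (if P xs then 1 else 0) * F xs + (1 - (if P xs then 1 else 0)) * G xs"])
    (auto intro!: recursive_in_intros)

lemma prim_rec_all: "prim_rec (\<lambda>ys. 1) (\<lambda>zs. zs!1 * (if P (hd zs) (tl (tl zs)) then 1 else 0)) m xs
   = (if \<forall>i<m. P i xs then 1 else 0)"
  by (induction m) (auto simp: less_Suc_eq)

lemma decidable_in_all [recursive_in_intros]:
  assumes "decidable_in g (Suc n) (\<lambda>ys. P (hd ys) (tl ys))" "recursive_in g n B"
  shows "decidable_in g n (\<lambda>xs. \<forall>i<B xs. P i xs)"
proof -
  have step: "recursive_in g (Suc (Suc n)) (\<lambda>zs. if P (hd zs) (tl (tl zs)) then 1 else 0)"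
    using recursive_in_drop_second[of g n "\<lambda>a b. if P a b then 1 else 0"] assms(1)
    unfolding decidable_in_def by simp
  have "recursive_in g (Suc n) (\<lambda>ys. prim_rec (\<lambda>ys. 1)
      (\<lambda>zs. zs!1 * (if P (hd zs) (tl (tl zs)) then 1 else 0)) (hd ys) (tl ys))"
    by (rule recursive_in_prim_rec) (auto intro!: recursive_in_intros step)
  from recursive_in_subst_hd[OF this assms(2)] show ?thesis
    unfolding decidable_in_def prim_rec_all .
qed

lemma decidable_in_ex [recursive_in_intros]:
  assumes "decidable_in g (Suc n) (\<lambda>ys. P (hd ys) (tl ys))" "recursive_in g n B"
  shows "decidable_in g n (\<lambda>xs. \<exists>i<B xs. P i xs)"
proof -
  have "decidable_in g (Suc n) (\<lambda>ys. \<not> P (hd ys) (tl ys))" by (rule decidable_in_not[OF assms(1)])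
  from decidable_in_not[OF decidable_in_all[OF this assms(2)]] show ?thesis by simp
qed

lemma prim_rec_sum: "prim_rec (\<lambda>ys. 0) (\<lambda>zs. zs!1 + F (hd zs) (tl (tl zs))) m xs = (\<Sum>i<m. F i xs)"
  by (induction m) auto

lemma recursive_in_sum [recursive_in_intros]:
  assumes "recursive_in g (Suc n) (\<lambda>ys. F (hd ys) (tl ys))" "recursive_in g n B"
  shows "recursive_in g n (\<lambda>xs. \<Sum>i<B xs. F i xs)"
proof -
  have "recursive_in g (Suc n)
      (\<lambda>ys. prim_rec (\<lambda>ys. 0) (\<lambda>zs. zs!1 + F (hd zs) (tl (tl zs))) (hd ys) (tl ys))"
    by (rule recursive_in_prim_rec)
      (auto intro!: recursive_in_intros recursive_in_drop_second[OF assms(1)])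
  from recursive_in_subst_hd[OF this assms(2)] show ?thesis unfolding prim_rec_sum .
qed

lemma prim_rec_iter: "prim_rec I (\<lambda>zs. S (zs!1) (tl (tl zs))) m xs = ((\<lambda>r. S r xs) ^^ m) (I xs)"
  by (induction m) auto

lemma recursive_in_iter [recursive_in_intros]:
  assumes "recursive_in g (Suc n) (\<lambda>ys. S (hd ys) (tl ys))" "recursive_in g n I"
    "recursive_in g n N"
  shows "recursive_in g n (\<lambda>xs. ((\<lambda>r. S r xs) ^^ N xs) (I xs))"
proof -
  have "recursive_in g (Suc (Suc n)) (\<lambda>zs. S (zs!1) (tl (tl zs)))"
    using recursive_in_lift[OF assms(1)]
    by (rule recursive_in_cong) (auto simp: length_Suc_conv)
  then have "recursive_in g (Suc n) (\<lambda>ys. prim_rec I (\<lambda>zs. S (zs!1) (tl (tl zs))) (hd ys) (tl ys))"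
    by (rule recursive_in_prim_rec[OF assms(2)])
  from recursive_in_subst_hd[OF this assms(3)] show ?thesis unfolding prim_rec_iter .
qed

lemma recursive_in_Least [recursive_in_intros]:
  assumes "decidable_in g (Suc n) (\<lambda>ys. P (hd ys) (tl ys))" "\<And>xs. length xs = n \<Longrightarrow> \<exists>m. P m xs"
  shows "recursive_in g n (\<lambda>xs. LEAST m. P m xs)"
proof -
  have "recursive_in g (Suc n) (\<lambda>ys. if P (hd ys) (tl ys) then 0 else 1)"
    using decidable_in_not[OF assms(1)] unfolding decidable_in_def by (rule recursive_in_cong) simp
  then have "recursive_in g n (\<lambda>ys. LEAST m. (if P m ys then 0 else 1) = (0::nat))"
    using recursive_in_minimize[of g n "\<lambda>ys. if P (hd ys) (tl ys) then 0 else 1"] assms(2) by force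
  moreover have "(LEAST m. (if P m ys then 0 else 1) = (0::nat)) = (LEAST m. P m ys)" for ys
    by (rule arg_cong[where f=Least]) auto
  ultimately show ?thesis by simp
qed

lemma recursive_in_prod_encode [recursive_in_intros]:
  "recursive_in g n F \<Longrightarrow> recursive_in g n G \<Longrightarrow> recursive_in g n (\<lambda>xs. prod_encode (F xs, G xs))"
  unfolding prod_encode_def by (auto intro!: recursive_in_intros)

lemma triangle_mono: "m \<le> n \<Longrightarrow> triangle m \<le> triangle n"
  by (induction n rule: dec_induct) auto

definition prod_decode_diag :: "nat \<Rightarrow> nat" where
  "prod_decode_diag z = (LEAST t. z < triangle (Suc t))"

lemma prod_decode_diag_eq: "prod_decode z = (a, b) \<Longrightarrow> prod_decode_diag z = a + b"
proof -
  assume h: "prod_decode z = (a, b)"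
  have z: "z = triangle (a + b) + a"
    using prod_decode_inverse[of z] h by (simp add: prod_encode_def)
  show ?thesis unfolding prod_decode_diag_def
  proof (rule Least_equality)
    show "z < triangle (Suc (a + b))" using z by simp
  next
    fix t assume "z < triangle (Suc t)"
    then show "a + b \<le> t" using z triangle_mono[of "Suc t" "a + b"]
      by (metis le_add1 not_le order.trans not_less_eq_eq)
  qed
qed

lemma fst_prod_decode_eq: "fst (prod_decode z) = z - triangle (prod_decode_diag z)"
proof -
  obtain a b where h: "prod_decode z = (a, b)" by (cases "prod_decode z")
  have z: "z = triangle (a + b) + a"
    using prod_decode_inverse[of z] h by (simp add: prod_encode_def)
  show ?thesis using h z prod_decode_diag_eq[OF h] by simp
qed

lemma snd_prod_decode_eq: "snd (prod_decode z) = prod_decode_diag z - fst (prod_decode z)"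
  by (cases "prod_decode z") (simp add: prod_decode_diag_eq)

lemma recursive_in_prod_decode_diag_unary: "recursive_in g 1 (\<lambda>xs. prod_decode_diag (xs!0))"
  unfolding prod_decode_diag_def
proof (rule recursive_in_Least)
  show "decidable_in g (Suc 1) (\<lambda>ys. tl ys ! 0 < triangle (Suc (hd ys)))"
    by (auto intro!: recursive_in_intros)
next
  fix xs :: "nat list"
  show "\<exists>m. xs ! 0 < triangle (Suc m)" by (rule exI[of _ "xs!0"]) simp
qed

lemma recursive_in_prod_decode_diag [recursive_in_intros]:
  "recursive_in g n F \<Longrightarrow> recursive_in g n (\<lambda>xs. prod_decode_diag (F xs))"
  by (rule recursive_in_comp_unary[OF recursive_in_prod_decode_diag_unary])

lemma recursive_in_fst [recursive_in_intros]:
  "recursive_in g n F \<Longrightarrow> recursive_in g n (\<lambda>xs. fst (prod_decode (F xs)))"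
  unfolding fst_prod_decode_eq by (auto intro!: recursive_in_intros)

lemma recursive_in_snd [recursive_in_intros]:
  "recursive_in g n F \<Longrightarrow> recursive_in g n (\<lambda>xs. snd (prod_decode (F xs)))"
  unfolding snd_prod_decode_eq fst_prod_decode_eq by (auto intro!: recursive_in_intros)

definition code_hd :: "nat \<Rightarrow> nat" where "code_hd x = fst (prod_decode (x - 1))"
definition code_tl :: "nat \<Rightarrow> nat" where "code_tl x = snd (prod_decode (x - 1))"
definition code_cons :: "nat \<Rightarrow> nat \<Rightarrow> nat" where "code_cons a x = Suc (prod_encode (a, x))"
definition code_nth :: "nat \<Rightarrow> nat \<Rightarrow> nat" where "code_nth x i = code_hd ((code_tl ^^ i) x)"
definition code_length :: "nat \<Rightarrow> nat" where "code_length x = (LEAST k. (code_tl ^^ k) x = 0)"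

lemma code_hd_Suc_prod_encode [simp]: "code_hd (Suc (prod_encode (a, x))) = a"
  by (simp add: code_hd_def)

lemma code_tl_Suc_prod_encode [simp]: "code_tl (Suc (prod_encode (a, x))) = x"
  by (simp add: code_tl_def)

lemma code_hd_code_cons [simp]: "code_hd (code_cons a x) = a"
  by (simp add: code_cons_def)

lemma code_tl_code_cons [simp]: "code_tl (code_cons a x) = x"
  by (simp add: code_cons_def)

lemma list_decode_code_cons [simp]: "list_decode (code_cons a x) = a # list_decode x"
  by (simp add: code_cons_def)

lemma prod_decode_0: "prod_decode 0 = (0, 0)"
  using prod_encode_inverse[of "(0, 0)"] by (simp add: prod_encode_def)

lemma code_tl_list_encode: "code_tl (list_encode l) = list_encode (tl l)"
  by (cases l) (auto simp: code_tl_def prod_decode_0)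

lemma code_hd_list_encode: "l \<noteq> [] \<Longrightarrow> code_hd (list_encode l) = hd l"
  by (cases l) (auto simp: code_hd_def)

lemma code_tl_funpow_list_encode: "(code_tl ^^ k) (list_encode l) = list_encode (drop k l)"
  by (induction k) (auto simp: code_tl_list_encode drop_Suc tl_drop)

lemma code_nth_list_encode: "i < length l \<Longrightarrow> code_nth (list_encode l) i = l ! i"
  by (simp add: code_nth_def code_tl_funpow_list_encode code_hd_list_encode hd_drop_conv_nth)

lemma code_length_list_encode: "code_length (list_encode l) = length l"
  unfolding code_length_def code_tl_funpow_list_encode
proof (rule Least_equality)
  show "list_encode (drop (length l) l) = 0" by simp
next
  fix y assume "list_encode (drop y l) = 0"
  then have "drop y l = []" by (metis list_encode.simps(1) list_encode_eq)
  then show "length l \<le> y" by simp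
qed

lemma code_length_eq_length: "code_length x = length (list_decode x)"
  by (metis code_length_list_encode list_decode_inverse)

lemma code_nth_eq_nth: "i < length (list_decode x) \<Longrightarrow> code_nth x i = list_decode x ! i"
  by (metis code_nth_list_encode list_decode_inverse)

lemma list_decode_eq_Cons: "x \<noteq> 0 \<Longrightarrow> list_decode x = code_hd x # list_decode (code_tl x)"
  by (metis code_hd_list_encode code_tl_list_encode list.collapse list_decode_inverse
      list_encode.simps(1) list_encode_inverse)

lemma mem_code_nth_list_encode:
  "x \<in> set L \<Longrightarrow> \<exists>i<code_length (list_encode L). code_nth (list_encode L) i = x"
  by (metis in_set_conv_nth code_length_list_encode code_nth_list_encode)

lemma less_list_encode_if_mem: "a \<in> set l \<Longrightarrow> a < list_encode l"
proof (induction l)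
  case Nil then show ?case by simp
next
  case (Cons b l)
  have "b \<le> prod_encode (b, list_encode l)" "list_encode l \<le> prod_encode (b, list_encode l)"
    by (rule le_prod_encode_1, rule le_prod_encode_2)
  then show ?case using Cons by auto
qed

lemma code_nth_less: "i < code_length x \<Longrightarrow> code_nth x i < x"
  by (metis code_length_eq_length list_decode_inverse less_list_encode_if_mem nth_mem code_nth_eq_nth)

lemma code_hd_le: "code_hd x \<le> x"
  unfolding code_hd_def
  by (metis diff_le_self le_prod_encode_1 order.trans prod.collapse prod_decode_inverse)

lemma recursive_in_code_hd [recursive_in_intros]:
  "recursive_in g n F \<Longrightarrow> recursive_in g n (\<lambda>xs. code_hd (F xs))"
  unfolding code_hd_def by (intro recursive_in_intros)

lemma recursive_in_code_tl [recursive_in_intros]: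
  "recursive_in g n F \<Longrightarrow> recursive_in g n (\<lambda>xs. code_tl (F xs))"
  unfolding code_tl_def by (intro recursive_in_intros)

lemma recursive_in_code_cons [recursive_in_intros]:
  "recursive_in g n F \<Longrightarrow> recursive_in g n G \<Longrightarrow> recursive_in g n (\<lambda>xs. code_cons (F xs) (G xs))"
  unfolding code_cons_def by (intro recursive_in_intros)

lemma recursive_in_code_nth [recursive_in_intros]:
  "recursive_in g n F \<Longrightarrow> recursive_in g n G \<Longrightarrow> recursive_in g n (\<lambda>xs. code_nth (F xs) (G xs))"
  unfolding code_nth_def by (intro recursive_in_intros) auto

lemma recursive_in_code_length_unary: "recursive_in g 1 (\<lambda>xs. code_length (xs!0))"
  unfolding code_length_def
proof (rule recursive_in_Least)
  show "decidable_in g (Suc 1) (\<lambda>ys. (code_tl ^^ hd ys) (tl ys ! 0) = 0)"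
    by (intro recursive_in_intros) auto
next
  fix xs :: "nat list"
  show "\<exists>m. (code_tl ^^ m) (xs ! 0) = 0"
    by (metis code_tl_funpow_list_encode drop_all list_decode_inverse list_encode.simps(1) order_refl)
qed

lemma recursive_in_code_length [recursive_in_intros]:
  "recursive_in g n F \<Longrightarrow> recursive_in g n (\<lambda>xs. code_length (F xs))"
  by (rule recursive_in_comp_unary[OF recursive_in_code_length_unary])

section \<open>Coded derivations of program evaluations\<close>

text \<open>The number judg c x y codes the judgment that the program with code c, run on the
  argument list with code x, returns y.\<close>

definition judg :: "nat \<Rightarrow> nat \<Rightarrow> nat \<Rightarrow> nat" where
  "judg c x y = prod_encode (c, prod_encode (x, y))"
definition judg_prog :: "nat \<Rightarrow> nat" where "judg_prog e = fst (prod_decode e)"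
definition judg_args :: "nat \<Rightarrow> nat" where "judg_args e = fst (prod_decode (snd (prod_decode e)))"
definition judg_val :: "nat \<Rightarrow> nat" where "judg_val e = snd (prod_decode (snd (prod_decode e)))"
definition code_tag :: "nat \<Rightarrow> nat" where "code_tag c = fst (prod_decode c)"
definition code_body :: "nat \<Rightarrow> nat" where "code_body c = snd (prod_decode c)"

lemma judg_simps [simp]:
  "judg_prog (judg c x y) = c" "judg_args (judg c x y) = x" "judg_val (judg c x y) = y"
  by (simp_all add: judg_def judg_prog_def judg_args_def judg_val_def)

lemma code_tag_prod_encode [simp]: "code_tag (prod_encode (a, b)) = a"
  by (simp add: code_tag_def)

lemma code_body_prod_encode [simp]: "code_body (prod_encode (a, b)) = b"
  by (simp add: code_body_def)

lemma prod_encode_code_tag_body: "prod_encode (code_tag c, code_body c) = c"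
  by (simp add: code_tag_def code_body_def)

lemma judg_args_le: "judg_args e \<le> e"
  unfolding judg_args_def
  by (metis le_prod_encode_1 le_prod_encode_2 order.trans prod.collapse prod_decode_inverse)

lemma recursive_in_judg [recursive_in_intros]:
  "recursive_in g n F \<Longrightarrow> recursive_in g n G \<Longrightarrow> recursive_in g n H
   \<Longrightarrow> recursive_in g n (\<lambda>xs. judg (F xs) (G xs) (H xs))"
  unfolding judg_def by (intro recursive_in_intros)

lemma recursive_in_judg_prog [recursive_in_intros]:
  "recursive_in g n F \<Longrightarrow> recursive_in g n (\<lambda>xs. judg_prog (F xs))"
  unfolding judg_prog_def by (intro recursive_in_intros)

lemma recursive_in_judg_args [recursive_in_intros]:
  "recursive_in g n F \<Longrightarrow> recursive_in g n (\<lambda>xs. judg_args (F xs))"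
  unfolding judg_args_def by (intro recursive_in_intros)

lemma recursive_in_judg_val [recursive_in_intros]:
  "recursive_in g n F \<Longrightarrow> recursive_in g n (\<lambda>xs. judg_val (F xs))"
  unfolding judg_val_def by (intro recursive_in_intros)

lemma recursive_in_code_tag [recursive_in_intros]:
  "recursive_in g n F \<Longrightarrow> recursive_in g n (\<lambda>xs. code_tag (F xs))"
  unfolding code_tag_def by (intro recursive_in_intros)

lemma recursive_in_code_body [recursive_in_intros]:
  "recursive_in g n F \<Longrightarrow> recursive_in g n (\<lambda>xs. code_body (F xs))"
  unfolding code_body_def by (intro recursive_in_intros)

text \<open>A rule sees the judgments derived so far only through the bounded existential
  E P = "some earlier entry satisfies P"; this keeps the check of a coded derivation
  recursive. The rules below mirror the introduction rules of eval, and the tags mirror enc.\<close>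

definition zero_rule :: "nat \<Rightarrow> bool" where
  "zero_rule J \<longleftrightarrow> code_tag (judg_prog J) = 0 \<and> code_body (judg_prog J) = 0 \<and> judg_val J = 0"

definition succ_rule :: "nat \<Rightarrow> bool" where
  "succ_rule J \<longleftrightarrow> code_tag (judg_prog J) = 1 \<and> code_body (judg_prog J) = 0 \<and> judg_args J \<noteq> 0 \<and>
     judg_val J = Suc (code_hd (judg_args J))"

definition proj_rule :: "nat \<Rightarrow> bool" where
  "proj_rule J \<longleftrightarrow> code_tag (judg_prog J) = 2 \<and> code_body (judg_prog J) < code_length (judg_args J) \<and>
     judg_val J = code_nth (judg_args J) (code_body (judg_prog J))"

definition comp_rule :: "((nat \<Rightarrow> bool) \<Rightarrow> bool) \<Rightarrow> nat \<Rightarrow> bool" where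
  "comp_rule E J \<longleftrightarrow> code_tag (judg_prog J) = 3 \<and>
     E (\<lambda>e. judg_prog e = fst (prod_decode (code_body (judg_prog J))) \<and> judg_val e = judg_val J \<and>
        code_length (judg_args e) = code_length (snd (prod_decode (code_body (judg_prog J)))) \<and>
        (\<forall>k<code_length (snd (prod_decode (code_body (judg_prog J)))).
           E (\<lambda>e'. e' = judg (code_nth (snd (prod_decode (code_body (judg_prog J)))) k) (judg_args J)
                            (code_nth (judg_args e) k))))"

definition prim_rec_zero_rule :: "((nat \<Rightarrow> bool) \<Rightarrow> bool) \<Rightarrow> nat \<Rightarrow> bool" where
  "prim_rec_zero_rule E J \<longleftrightarrow> code_tag (judg_prog J) = 4 \<and> judg_args J \<noteq> 0 \<and> code_hd (judg_args J) = 0 \<and>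
     E (\<lambda>e. e = judg (fst (prod_decode (code_body (judg_prog J)))) (code_tl (judg_args J)) (judg_val J))"

definition prim_rec_succ_rule :: "((nat \<Rightarrow> bool) \<Rightarrow> bool) \<Rightarrow> nat \<Rightarrow> bool" where
  "prim_rec_succ_rule E J \<longleftrightarrow> code_tag (judg_prog J) = 4 \<and> judg_args J \<noteq> 0 \<and> code_hd (judg_args J) \<noteq> 0 \<and>
     E (\<lambda>e. judg_prog e = judg_prog J \<and>
        judg_args e = code_cons (code_hd (judg_args J) - 1) (code_tl (judg_args J)) \<and>
        E (\<lambda>e'. e' = judg (snd (prod_decode (code_body (judg_prog J))))
                  (code_cons (code_hd (judg_args J) - 1) (code_cons (judg_val e) (code_tl (judg_args J))))
                  (judg_val J)))"

definition minimize_rule :: "((nat \<Rightarrow> bool) \<Rightarrow> bool) \<Rightarrow> nat \<Rightarrow> bool" where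
  "minimize_rule E J \<longleftrightarrow> code_tag (judg_prog J) = 5 \<and>
     E (\<lambda>e. e = judg (code_body (judg_prog J)) (code_cons (judg_val J) (judg_args J)) 0) \<and>
     (\<forall>m<judg_val J. E (\<lambda>e. judg_prog e = code_body (judg_prog J) \<and>
        judg_args e = code_cons m (judg_args J) \<and> judg_val e \<noteq> 0))"

definition oracle_rule :: "(nat \<Rightarrow> nat) \<Rightarrow> nat \<Rightarrow> bool" where
  "oracle_rule orc J \<longleftrightarrow> code_tag (judg_prog J) = 6 \<and> code_body (judg_prog J) = 0 \<and> judg_args J \<noteq> 0 \<and>
     judg_val J = orc (code_hd (judg_args J))"

definition eval_rule :: "(nat \<Rightarrow> nat) \<Rightarrow> ((nat \<Rightarrow> bool) \<Rightarrow> bool) \<Rightarrow> nat \<Rightarrow> bool" where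
  "eval_rule orc E J \<longleftrightarrow> zero_rule J \<or> succ_rule J \<or> proj_rule J \<or> comp_rule E J \<or>
     prim_rec_zero_rule E J \<or> prim_rec_succ_rule E J \<or> minimize_rule E J \<or> oracle_rule orc J"

lemma eval_ruleI:
  "zero_rule J \<Longrightarrow> eval_rule orc E J" "succ_rule J \<Longrightarrow> eval_rule orc E J"
  "proj_rule J \<Longrightarrow> eval_rule orc E J" "comp_rule E J \<Longrightarrow> eval_rule orc E J"
  "prim_rec_zero_rule E J \<Longrightarrow> eval_rule orc E J" "prim_rec_succ_rule E J \<Longrightarrow> eval_rule orc E J"
  "minimize_rule E J \<Longrightarrow> eval_rule orc E J" "oracle_rule orc J \<Longrightarrow> eval_rule orc E J"
  by (simp_all add: eval_rule_def)

lemmas eval_rule_defs = eval_rule_def zero_rule_def succ_rule_def proj_rule_def comp_rule_def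
  prim_rec_zero_rule_def prim_rec_succ_rule_def minimize_rule_def oracle_rule_def

definition prog_rule :: "((nat \<Rightarrow> bool) \<Rightarrow> bool) \<Rightarrow> nat \<Rightarrow> bool" where
  "prog_rule E c \<longleftrightarrow>
     (code_tag c = 0 \<and> code_body c = 0) \<or> (code_tag c = 1 \<and> code_body c = 0) \<or> code_tag c = 2 \<or>
     (code_tag c = 3 \<and> E (\<lambda>e. e = fst (prod_decode (code_body c))) \<and>
        (\<forall>k<code_length (snd (prod_decode (code_body c))).
           E (\<lambda>e. e = code_nth (snd (prod_decode (code_body c))) k))) \<or>
     (code_tag c = 4 \<and> E (\<lambda>e. e = fst (prod_decode (code_body c))) \<and>
        E (\<lambda>e. e = snd (prod_decode (code_body c)))) \<or>
     (code_tag c = 5 \<and> E (\<lambda>e. e = code_body c)) \<or>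
     (code_tag c = 6 \<and> code_body c = 0)"

definition derivation :: "(((nat \<Rightarrow> bool) \<Rightarrow> bool) \<Rightarrow> nat \<Rightarrow> bool) \<Rightarrow> nat list \<Rightarrow> bool" where
  "derivation R L \<longleftrightarrow> (\<forall>i<length L. R (\<lambda>P. \<exists>e\<in>set (take i L). P e) (L ! i))"

definition derivation_code :: "(((nat \<Rightarrow> bool) \<Rightarrow> bool) \<Rightarrow> nat \<Rightarrow> bool) \<Rightarrow> nat \<Rightarrow> bool" where
  "derivation_code R D \<longleftrightarrow> (\<forall>i<code_length D. R (\<lambda>P. \<exists>j<i. P (code_nth D j)) (code_nth D i))"

lemma bex_set_take: "i \<le> length L \<Longrightarrow> (\<exists>e\<in>set (take i L). P e) = (\<exists>j<i. P (L ! j))"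
proof
  assume "\<exists>e\<in>set (take i L). P e"
  then obtain j where "j < length (take i L)" "P (take i L ! j)" by (auto simp: in_set_conv_nth)
  then show "\<exists>j<i. P (L ! j)" by auto
next
  assume "i \<le> length L" "\<exists>j<i. P (L ! j)"
  then obtain j where "j < i" "P (L ! j)" by blast
  moreover have "take i L ! j \<in> set (take i L)" using \<open>i \<le> length L\<close> \<open>j < i\<close> by (intro nth_mem) simp
  ultimately show "\<exists>e\<in>set (take i L). P e" by auto
qed

lemma derivation_code_list_encode: "derivation_code R (list_encode L) = derivation R L"
proof -
  have "(\<lambda>P. \<exists>j<i. P (code_nth (list_encode L) j)) = (\<lambda>P. \<exists>e\<in>set (take i L). P e)"
    if "i < length L" for i
    using that by (intro ext) (auto simp: bex_set_take code_nth_list_encode)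
  then show ?thesis
    unfolding derivation_code_def derivation_def code_length_list_encode
    by (simp add: code_nth_list_encode)
qed

lemma derivation_code_eq: "derivation_code R D = derivation R (list_decode D)"
  by (metis derivation_code_list_encode list_decode_inverse)

lemma decidable_in_derivation_code_prog_rule [recursive_in_intros]:
  "recursive_in g n G \<Longrightarrow> decidable_in g n (\<lambda>xs. derivation_code prog_rule (G xs))"
proof -
  have "decidable_in g 1 (\<lambda>xs. derivation_code prog_rule (xs!0))"
    unfolding derivation_code_def prog_rule_def by (intro recursive_in_intros; simp)
  then show "recursive_in g n G \<Longrightarrow> ?thesis"
    unfolding decidable_in_def by (rule recursive_in_comp_unary)
qed

lemma decidable_in_derivation_code_eval_rule:
  assumes "recursive_in g 2 (\<lambda>xs. orc (xs!0) (xs!1))" "recursive_in g n F" "recursive_in g n G"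
  shows "decidable_in g n (\<lambda>xs. derivation_code (eval_rule (orc (F xs))) (G xs))"
proof -
  have "decidable_in g 2 (\<lambda>xs. derivation_code (eval_rule (orc (xs!0))) (xs!1))"
    unfolding derivation_code_def eval_rule_defs
    by (intro recursive_in_intros recursive_in_comp_binary[OF assms(1)]; simp)
  then show ?thesis
    unfolding decidable_in_def by (rule recursive_in_comp_binary[OF _ assms(2,3)])
qed

lemma decidable_in_derivation_code_eval_rule_0 [recursive_in_intros]:
  "recursive_in g n G \<Longrightarrow> decidable_in g n (\<lambda>xs. derivation_code (eval_rule (\<lambda>_. 0)) (G xs))"
  using decidable_in_derivation_code_eval_rule[of g "\<lambda>_ _. 0" n "\<lambda>_. 0" G]
  by (simp add: recursive_in_const)

lemma derivation_code_oracle_cong: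
  assumes "\<forall>q<D. orc q = orc' q"
  shows "derivation_code (eval_rule orc) D = derivation_code (eval_rule orc') D"
proof -
  have "eval_rule orc E (code_nth D i) = eval_rule orc' E (code_nth D i)" if "i < code_length D" for i E
  proof -
    have "code_hd (judg_args (code_nth D i)) < D"
      using code_hd_le judg_args_le code_nth_less[OF that] by (meson le_less_trans)
    then show ?thesis using assms by (simp add: eval_rule_def oracle_rule_def)
  qed
  then show ?thesis unfolding derivation_code_def by auto
qed

definition mono_rule :: "(((nat \<Rightarrow> bool) \<Rightarrow> bool) \<Rightarrow> nat \<Rightarrow> bool) \<Rightarrow> bool" where
  "mono_rule R \<longleftrightarrow> (\<forall>S S' x. S \<subseteq> S' \<longrightarrow> R (\<lambda>P. \<exists>e\<in>S. P e) x \<longrightarrow> R (\<lambda>P. \<exists>e\<in>S'. P e) x)"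

lemma mono_rule_eval_rule: "mono_rule (eval_rule orc)"
  unfolding mono_rule_def eval_rule_def
proof (intro allI impI)
  fix S S' :: "nat set" and x
  assume "S \<subseteq> S'"
  then have "comp_rule (\<lambda>P. \<exists>e\<in>S. P e) x \<Longrightarrow> comp_rule (\<lambda>P. \<exists>e\<in>S'. P e) x"
    and "prim_rec_zero_rule (\<lambda>P. \<exists>e\<in>S. P e) x \<Longrightarrow> prim_rec_zero_rule (\<lambda>P. \<exists>e\<in>S'. P e) x"
    and "prim_rec_succ_rule (\<lambda>P. \<exists>e\<in>S. P e) x \<Longrightarrow> prim_rec_succ_rule (\<lambda>P. \<exists>e\<in>S'. P e) x"
    and "minimize_rule (\<lambda>P. \<exists>e\<in>S. P e) x \<Longrightarrow> minimize_rule (\<lambda>P. \<exists>e\<in>S'. P e) x"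
    unfolding comp_rule_def prim_rec_zero_rule_def prim_rec_succ_rule_def minimize_rule_def
    by blast+
  then show "zero_rule x \<or> succ_rule x \<or> proj_rule x \<or> comp_rule (\<lambda>P. \<exists>e\<in>S. P e) x \<or>
      prim_rec_zero_rule (\<lambda>P. \<exists>e\<in>S. P e) x \<or> prim_rec_succ_rule (\<lambda>P. \<exists>e\<in>S. P e) x \<or>
      minimize_rule (\<lambda>P. \<exists>e\<in>S. P e) x \<or> oracle_rule orc x \<Longrightarrow>
    zero_rule x \<or> succ_rule x \<or> proj_rule x \<or> comp_rule (\<lambda>P. \<exists>e\<in>S'. P e) x \<or>
      prim_rec_zero_rule (\<lambda>P. \<exists>e\<in>S'. P e) x \<or> prim_rec_succ_rule (\<lambda>P. \<exists>e\<in>S'. P e) x \<or>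
      minimize_rule (\<lambda>P. \<exists>e\<in>S'. P e) x \<or> oracle_rule orc x"
    by blast
qed

lemma mono_rule_prog_rule: "mono_rule prog_rule"
  unfolding mono_rule_def
proof (intro allI impI)
  fix S S' :: "nat set" and x
  assume sub: "S \<subseteq> S'" and "prog_rule (\<lambda>P. \<exists>e\<in>S. P e) x"
  then show "prog_rule (\<lambda>P. \<exists>e\<in>S'. P e) x"
    unfolding prog_rule_def by (elim disjE) (use sub in blast)+
qed

lemma derivation_Nil: "derivation R []"
  by (simp add: derivation_def)

lemma derivation_snoc:
  assumes "derivation R L" "R (\<lambda>P. \<exists>e\<in>set L. P e) x"
  shows "derivation R (L @ [x])"
  using assms unfolding derivation_def by (auto simp: nth_append less_Suc_eq)

lemma derivation_append:
  assumes "mono_rule R" "derivation R L1" "derivation R L2"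
  shows "derivation R (L1 @ L2)"
  unfolding derivation_def
proof (intro allI impI)
  fix i assume i: "i < length (L1 @ L2)"
  show "R (\<lambda>P. \<exists>e\<in>set (take i (L1 @ L2)). P e) ((L1 @ L2) ! i)"
  proof (cases "i < length L1")
    case True
    then show ?thesis using assms(2) unfolding derivation_def by (simp add: nth_append)
  next
    case False
    define j where "j = i - length L1"
    have j: "j < length L2" "i = length L1 + j" using i False j_def by auto
    have "R (\<lambda>P. \<exists>e\<in>set (take j L2). P e) (L2 ! j)" using assms(3) j unfolding derivation_def
      by simp
    moreover have "set (take j L2) \<subseteq> set (take i (L1 @ L2))" using j by auto
    ultimately have "R (\<lambda>P. \<exists>e\<in>set (take i (L1 @ L2)). P e) (L2 ! j)"
      using assms(1) unfolding mono_rule_def by blast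
    then show ?thesis using j by (simp add: nth_append)
  qed
qed

lemma derivation_concat:
  assumes "mono_rule R" "\<forall>L\<in>set Ls. derivation R L"
  shows "derivation R (concat Ls)"
  using assms(2) by (induction Ls) (auto simp: derivation_Nil derivation_append[OF assms(1)])

lemma derivation_covering:
  fixes n :: nat
  assumes "mono_rule R" "\<And>i. i < n \<Longrightarrow> \<exists>L. derivation R L \<and> x i \<in> set L"
  shows "\<exists>L. derivation R L \<and> (\<forall>i<n. x i \<in> set L)"
proof -
  obtain LL where LL: "\<forall>i<n. derivation R (LL i) \<and> x i \<in> set (LL i)" using assms(2) by metis
  have "derivation R (concat (map LL [0..<n]))"
    by (rule derivation_concat[OF assms(1)]) (use LL in auto)
  moreover have "\<forall>i<n. x i \<in> set (concat (map LL [0..<n]))" using LL by force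
  ultimately show ?thesis by blast
qed

lemma derivation_snoc_mem:
  assumes "derivation R L" "R (\<lambda>P. \<exists>e\<in>set L. P e) x"
  shows "\<exists>L'. derivation R L' \<and> x \<in> set L'"
  using derivation_snoc[OF assms] by auto

lemma derivation_singleton:
  assumes "R (\<lambda>P. \<exists>e\<in>{}. P e) x"
  shows "\<exists>L. derivation R L \<and> x \<in> set L"
  using derivation_snoc_mem[OF derivation_Nil, of R x] assms by simp

lemma derivation_invariant:
  assumes "derivation R L" "x \<in> set L"
    and step: "\<And>S x. R (\<lambda>P. \<exists>e\<in>S. P e) x \<Longrightarrow> (\<And>e. e \<in> S \<Longrightarrow> Q e) \<Longrightarrow> Q x"
  shows "Q x"
proof -
  have "Q (L ! i)" if "i < length L" for i
    using that
  proof (induction i rule: less_induct)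
    case (less i)
    have "Q e" if e: "e \<in> set (take i L)" for e
    proof -
      obtain j where "j < length (take i L)" "take i L ! j = e"
        using e[unfolded in_set_conv_nth] by blast
      then show ?thesis using less by auto
    qed
    moreover have "R (\<lambda>P. \<exists>e\<in>set (take i L). P e) (L ! i)"
      using assms(1) less.prems unfolding derivation_def by blast
    ultimately show ?case by (rule step[rotated])
  qed
  then show ?thesis using assms(2) by (metis in_set_conv_nth)
qed

definition judgment_sound :: "(nat \<Rightarrow> nat) \<Rightarrow> nat \<Rightarrow> bool" where
  "judgment_sound orc e \<longleftrightarrow>
     (\<forall>f. enc f = judg_prog e \<longrightarrow> eval orc f (list_decode (judg_args e)) (judg_val e))"

lemma eval_if_judgment_sound: "judgment_sound orc (judg (enc f) x y) \<Longrightarrow> eval orc f (list_decode x) y"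
  by (simp add: judgment_sound_def)

context
  fixes orc S and E :: "(nat \<Rightarrow> bool) \<Rightarrow> bool" and f J
  assumes sound: "\<And>e. e \<in> S \<Longrightarrow> judgment_sound orc e"
    and E_eq: "E = (\<lambda>P. \<exists>e\<in>S. P e)"
    and f: "judg_prog J = enc f"
begin

private lemma sound_judg: "judg (enc g) x y \<in> S \<Longrightarrow> eval orc g (list_decode x) y"
  using sound eval_if_judgment_sound by blast

lemma comp_rule_sound:
  assumes "comp_rule E J"
  shows "eval orc f (list_decode (judg_args J)) (judg_val J)"
proof -
  obtain g hs where fgh: "f = Rcn g hs" using assms by (cases f) (simp_all add: comp_rule_def f)
  obtain e where e: "e \<in> S" "judg_prog e = enc g" "judg_val e = judg_val J"
      "code_length (judg_args e) = length hs"
    and ks: "\<forall>k<length hs. judg (enc (hs!k)) (judg_args J) (code_nth (judg_args e) k) \<in> S"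
    using assms f unfolding comp_rule_def E_eq fgh
    by (auto simp: code_length_list_encode code_nth_list_encode)
  let ?ys = "list_decode (judg_args e)"
  have len: "length ?ys = length hs" using e(4) by (simp add: code_length_eq_length)
  have "eval orc g ?ys (judg_val J)"
    using sound[OF e(1)] e(2,3) unfolding judgment_sound_def by simp
  moreover have "eval orc (hs!k) (list_decode (judg_args J)) (?ys ! k)" if "k < length hs" for k
    using sound_judg[OF ks[rule_format, OF that]] that len by (simp add: code_nth_eq_nth)
  ultimately show ?thesis unfolding fgh by (intro eval_Cn[OF len]) auto
qed

lemma prim_rec_zero_rule_sound:
  assumes "prim_rec_zero_rule E J"
  shows "eval orc f (list_decode (judg_args J)) (judg_val J)"
proof -
  obtain g h where fgh: "f = Rpr g h" using assms
    by (cases f) (simp_all add: prim_rec_zero_rule_def f)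
  have J: "judg_args J \<noteq> 0" "code_hd (judg_args J) = 0"
    and base: "judg (enc g) (code_tl (judg_args J)) (judg_val J) \<in> S"
    using assms f unfolding prim_rec_zero_rule_def E_eq fgh by auto
  have "eval orc g (list_decode (code_tl (judg_args J))) (judg_val J)" by (rule sound_judg[OF base])
  then show ?thesis unfolding fgh list_decode_eq_Cons[OF J(1)] J(2) by (rule eval_Pr0)
qed

lemma prim_rec_succ_rule_sound:
  assumes "prim_rec_succ_rule E J"
  shows "eval orc f (list_decode (judg_args J)) (judg_val J)"
proof -
  obtain g h where fgh: "f = Rpr g h" using assms
    by (cases f) (simp_all add: prim_rec_succ_rule_def f)
  define n where "n = code_hd (judg_args J) - 1"
  define xs where "xs = code_tl (judg_args J)"
  obtain e where J: "judg_args J \<noteq> 0" "code_hd (judg_args J) \<noteq> 0"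
    and e: "e \<in> S" "judg_prog e = enc f" "judg_args e = code_cons n xs"
    and step: "judg (enc h) (code_cons n (code_cons (judg_val e) xs)) (judg_val J) \<in> S"
    using assms f unfolding prim_rec_succ_rule_def E_eq fgh n_def xs_def by auto
  have "eval orc (Rpr g h) (n # list_decode xs) (judg_val e)"
    using sound[OF e(1)] e(2,3) fgh unfolding judgment_sound_def by simp
  moreover have "eval orc h (n # judg_val e # list_decode xs) (judg_val J)"
    using sound_judg[OF step] by simp
  moreover have "list_decode (judg_args J) = Suc n # list_decode xs"
    using J list_decode_eq_Cons n_def xs_def by simp
  ultimately show ?thesis unfolding fgh by (simp add: eval_PrS)
qed

lemma minimize_rule_sound:
  assumes "minimize_rule E J"
  shows "eval orc f (list_decode (judg_args J)) (judg_val J)"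
proof -
  obtain g where fg: "f = Rmn g" using assms by (cases f) (simp_all add: minimize_rule_def f)
  have zero: "judg (enc g) (code_cons (judg_val J) (judg_args J)) 0 \<in> S"
    and below: "\<forall>m<judg_val J. \<exists>e\<in>S. judg_prog e = enc g \<and> judg_args e = code_cons m (judg_args J) \<and>
        judg_val e \<noteq> 0"
    using assms f unfolding minimize_rule_def E_eq fg by auto
  have "eval orc g (judg_val J # list_decode (judg_args J)) 0" using sound_judg[OF zero] by simp
  moreover have "\<exists>y. eval orc g (m # list_decode (judg_args J)) y \<and> y \<noteq> 0" if m: "m < judg_val J" for m
  proof -
    obtain e where "e \<in> S" "judg_prog e = enc g" "judg_args e = code_cons m (judg_args J)"
        "judg_val e \<noteq> 0"
      using below m by blast
    then show ?thesis using sound unfolding judgment_sound_def by (metis list_decode_code_cons)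
  qed
  ultimately show ?thesis unfolding fg by (intro eval_Mn) auto
qed

lemma eval_rule_sound:
  assumes "eval_rule orc E J"
  shows "eval orc f (list_decode (judg_args J)) (judg_val J)"
  using assms unfolding eval_rule_def
proof (elim disjE)
  assume "zero_rule J"
  then show ?thesis using f by (cases f) (auto simp: zero_rule_def eval_Z)
next
  assume "succ_rule J"
  then show ?thesis using f by (cases f) (auto simp: succ_rule_def list_decode_eq_Cons eval_S)
next
  assume "proj_rule J"
  then show ?thesis
    using f by (cases f) (auto simp: proj_rule_def code_length_eq_length code_nth_eq_nth eval_Id)
next
  assume "oracle_rule orc J"
  then show ?thesis using f by (cases f) (auto simp: oracle_rule_def list_decode_eq_Cons eval_Or)
qed (fact comp_rule_sound prim_rec_zero_rule_sound prim_rec_succ_rule_sound minimize_rule_sound)+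

end

lemma derivation_sound:
  assumes "derivation (eval_rule orc) L" "e \<in> set L"
  shows "judgment_sound orc e"
  using assms
proof (rule derivation_invariant)
  fix S J assume R: "eval_rule orc (\<lambda>P. \<exists>e\<in>S. P e) J" and IH: "\<And>e. e \<in> S \<Longrightarrow> judgment_sound orc e"
  show "judgment_sound orc J" unfolding judgment_sound_def
  proof (intro allI impI)
    fix f assume "enc f = judg_prog J"
    from eval_rule_sound[OF IH refl this[symmetric] R]
    show "eval orc f (list_decode (judg_args J)) (judg_val J)" .
  qed
qed

lemma derivation_code_sound:
  assumes "derivation_code (eval_rule orc) D" "i < code_length D" "enc f = judg_prog (code_nth D i)"
  shows "eval orc f (list_decode (judg_args (code_nth D i))) (judg_val (code_nth D i))"
proof -
  have "code_nth D i \<in> set (list_decode D)"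
    using assms(2) by (simp add: code_length_eq_length code_nth_eq_nth)
  then show ?thesis
    using derivation_sound assms(1,3) unfolding derivation_code_eq judgment_sound_def by blast
qed
lemma prog_rule_sound:
  assumes R: "prog_rule (\<lambda>P. \<exists>e\<in>S. P e) c" and IH: "\<And>e. e \<in> S \<Longrightarrow> \<exists>f. enc f = e"
  shows "\<exists>f. enc f = c"
proof -
  let ?a = "fst (prod_decode (code_body c))" and ?b = "snd (prod_decode (code_body c))"
  have c: "c = prod_encode (code_tag c, prod_encode (?a, ?b))"
    using prod_encode_code_tag_body[of c] by simp
  from R[unfolded prog_rule_def] consider
    "code_tag c = 0 \<and> code_body c = 0" | "code_tag c = 1 \<and> code_body c = 0" | "code_tag c = 2" |
    "code_tag c = 3 \<and> ?a \<in> S \<and> (\<forall>k<code_length ?b. code_nth ?b k \<in> S)" |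
    "code_tag c = 4 \<and> ?a \<in> S \<and> ?b \<in> S" | "code_tag c = 5 \<and> code_body c \<in> S" |
    "code_tag c = 6 \<and> code_body c = 0"
    by blast
  then show ?thesis
  proof cases
    case 4
    then obtain f where f: "enc f = ?a" using IH by blast
    have "\<forall>k<code_length ?b. \<exists>h. enc h = code_nth ?b k" using 4 IH by blast
    then obtain H where H: "\<forall>k<code_length ?b. enc (H k) = code_nth ?b k" by metis
    have "map enc (map H [0..<code_length ?b]) = list_decode ?b"
      by (rule nth_equalityI) (auto simp: H code_length_eq_length code_nth_eq_nth)
    then have "enc (Rcn f (map H [0..<code_length ?b])) = c" using c 4 f by simp
    then show ?thesis by blast
  next
    case 5
    then obtain f h where "enc f = ?a" "enc h = ?b" using IH by blast
    then have "enc (Rpr f h) = c" using c 5 by simp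
    then show ?thesis by blast
  next
    case 6
    then obtain f where "enc f = code_body c" using IH by blast
    then have "enc (Rmn f) = c" using prod_encode_code_tag_body[of c] 6 by simp
    then show ?thesis by blast
  qed (metis prod_encode_code_tag_body enc.simps)+
qed

lemma derivation_code_prog_rule_sound:
  assumes "derivation_code prog_rule D" "i < code_length D"
  shows "\<exists>f. enc f = code_nth D i"
proof -
  have "code_nth D i \<in> set (list_decode D)"
    using assms(2) by (simp add: code_length_eq_length code_nth_eq_nth)
  with assms(1) show ?thesis
    unfolding derivation_code_eq by (rule derivation_invariant) (rule prog_rule_sound)
qed

inductive_cases eval_RzE: "eval g Rz xs y"
inductive_cases eval_RsE: "eval g Rs xs y"
inductive_cases eval_RidE: "eval g (Rid i) xs y"
inductive_cases eval_RcnE: "eval g (Rcn f hs) xs y"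
inductive_cases eval_RprE: "eval g (Rpr f h) xs y"
inductive_cases eval_RmnE: "eval g (Rmn f) xs y"
inductive_cases eval_RorE: "eval g Ror xs y"

lemma eval_deterministic: "eval g f xs y \<Longrightarrow> eval g f xs y' \<Longrightarrow> y = y'"
proof (induction arbitrary: y' rule: eval.induct)
  case (eval_Cn ys hs xs f z)
  from eval_Cn.prems obtain ys' where ys': "length ys' = length hs"
    "\<forall>i<length hs. eval g (hs ! i) xs (ys' ! i)" "eval g f ys' y'"
    by (cases rule: eval_RcnE) auto
  have "ys = ys'" using eval_Cn.hyps(1) eval_Cn.IH(1) ys'(1,2) by (intro nth_equalityI) auto
  then show ?case using eval_Cn.IH(2) ys'(3) by blast
next
  case (eval_Pr0 f xs y h)
  from eval_Pr0.prems show ?case by (cases rule: eval_RprE) (use eval_Pr0.IH in auto)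
next
  case (eval_PrS f h n xs y z)
  from eval_PrS.prems obtain y2 where "eval g (Rpr f h) (n # xs) y2" "eval g h (n # y2 # xs) y'"
    by (cases rule: eval_RprE) auto
  then show ?case using eval_PrS.IH by metis
next
  case (eval_Mn f n xs)
  from eval_Mn.prems obtain n' where n': "eval g f (n' # xs) 0"
    "\<forall>m<n'. \<exists>y. eval g f (m # xs) y \<and> y \<noteq> 0"
    and "n' = y'"
    by (cases rule: eval_RmnE) auto
  show ?case
  proof (rule linorder_cases[of n n'])
    assume "n < n'"
    then show ?case using n'(2) eval_Mn.IH(1) by (metis)
  next
    assume "n' < n"
    then show ?case using n'(1) eval_Mn.IH(2) by (metis)
  next
    assume "n = n'"
    then show ?case using \<open>n' = y'\<close> by simp
  qed
qed (auto elim: eval_RzE eval_RsE eval_RidE eval_RorE)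

context
  fixes S :: "nat set"
begin

lemma comp_rule_intro:
  assumes "judg (enc f) (list_encode ys) z \<in> S" "length ys = length hs"
    "\<And>i. i < length hs \<Longrightarrow> judg (enc (hs!i)) (list_encode xs) (ys!i) \<in> S"
  shows "comp_rule (\<lambda>P. \<exists>e\<in>S. P e) (judg (enc (Rcn f hs)) (list_encode xs) z)"
  unfolding comp_rule_def
  by (rule conjI, simp, rule bexI[OF _ assms(1)])
    (use assms(2,3) in \<open>simp add: code_length_list_encode code_nth_list_encode\<close>)

lemma prim_rec_succ_rule_intro:
  assumes "judg (enc (Rpr f h)) (list_encode (n # xs)) y \<in> S"
    "judg (enc h) (list_encode (n # y # xs)) z \<in> S"
  shows "prim_rec_succ_rule (\<lambda>P. \<exists>e\<in>S. P e) (judg (enc (Rpr f h)) (list_encode (Suc n # xs)) z)"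
  unfolding prim_rec_succ_rule_def
  by (simp add: code_cons_def, rule bexI[OF _ assms(1)]) (use assms(2) in \<open>simp add: code_cons_def\<close>)

lemma minimize_rule_intro:
  assumes "judg (enc f) (list_encode (n # xs)) 0 \<in> S"
    "\<And>m. m < n \<Longrightarrow> \<exists>y. y \<noteq> 0 \<and> judg (enc f) (list_encode (m # xs)) y \<in> S"
  shows "minimize_rule (\<lambda>P. \<exists>e\<in>S. P e) (judg (enc (Rmn f)) (list_encode xs) n)"
  unfolding minimize_rule_def using assms by (force simp: code_cons_def)

end

lemma eval_derivation_complete:
  assumes "eval orc f xs y"
  shows "\<exists>L. derivation (eval_rule orc) L \<and> judg (enc f) (list_encode xs) y \<in> set L"
  using assms
proof (induction rule: eval.induct)
  case (eval_Z xs)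
  have "zero_rule (judg (enc Rz) (list_encode xs) 0)" by (simp add: zero_rule_def)
  then show ?case by (blast intro: derivation_singleton eval_ruleI)
next
  case (eval_S x xs)
  have "succ_rule (judg (enc Rs) (list_encode (x # xs)) (Suc x))" by (simp add: succ_rule_def)
  then show ?case by (blast intro: derivation_singleton eval_ruleI)
next
  case (eval_Id i xs)
  have "proj_rule (judg (enc (Rid i)) (list_encode xs) (xs ! i))"
    using eval_Id by (simp add: proj_rule_def code_length_list_encode code_nth_list_encode)
  then show ?case by (blast intro: derivation_singleton eval_ruleI)
next
  case (eval_Or x xs)
  have "oracle_rule orc (judg (enc Ror) (list_encode (x # xs)) (orc x))"
    by (simp add: oracle_rule_def)
  then show ?case by (blast intro: derivation_singleton eval_ruleI)
next
  case (eval_Cn ys hs xs f z)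
  obtain L1 where L1: "derivation (eval_rule orc) L1"
    "\<forall>i<length hs. judg (enc (hs!i)) (list_encode xs) (ys!i) \<in> set L1"
    using derivation_covering[OF mono_rule_eval_rule,
        where n="length hs" and x="\<lambda>i. judg (enc (hs!i)) (list_encode xs) (ys!i)"] eval_Cn.IH(1)
    by blast
  obtain L2 where L2: "derivation (eval_rule orc) L2" "judg (enc f) (list_encode ys) z \<in> set L2"
    using eval_Cn.IH(2) by blast
  have "derivation (eval_rule orc) (L1 @ L2)"
    by (rule derivation_append[OF mono_rule_eval_rule L1(1) L2(1)])
  moreover have "comp_rule (\<lambda>P. \<exists>e\<in>set (L1 @ L2). P e) (judg (enc (Rcn f hs)) (list_encode xs) z)"
    by (rule comp_rule_intro[OF _ eval_Cn.hyps(1)]) (use L1(2) L2(2) in auto)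
  ultimately show ?case by (blast intro: derivation_snoc_mem eval_ruleI)
next
  case (eval_Pr0 f xs y h)
  then obtain L where "derivation (eval_rule orc) L" "judg (enc f) (list_encode xs) y \<in> set L"
    by blast
  moreover from this(2)
  have "prim_rec_zero_rule (\<lambda>P. \<exists>e\<in>set L. P e) (judg (enc (Rpr f h)) (list_encode (0 # xs)) y)"
    by (simp add: prim_rec_zero_rule_def code_cons_def)
  ultimately show ?case by (blast intro: derivation_snoc_mem eval_ruleI)
next
  case (eval_PrS f h n xs y z)
  obtain L1 where L1: "derivation (eval_rule orc) L1"
      "judg (enc (Rpr f h)) (list_encode (n # xs)) y \<in> set L1"
    using eval_PrS.IH(1) by blast
  obtain L2 where L2: "derivation (eval_rule orc) L2"
      "judg (enc h) (list_encode (n # y # xs)) z \<in> set L2"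
    using eval_PrS.IH(2) by blast
  have "derivation (eval_rule orc) (L1 @ L2)"
    by (rule derivation_append[OF mono_rule_eval_rule L1(1) L2(1)])
  moreover have "prim_rec_succ_rule (\<lambda>P. \<exists>e\<in>set (L1 @ L2). P e) (judg (enc (Rpr f h)) (list_encode (Suc n # xs)) z)"
    by (rule prim_rec_succ_rule_intro) (use L1(2) L2(2) in auto)
  ultimately show ?case by (blast intro: derivation_snoc_mem eval_ruleI)
next
  case (eval_Mn f n xs)
  obtain L1 where L1: "derivation (eval_rule orc) L1"
      "judg (enc f) (list_encode (n # xs)) 0 \<in> set L1"
    using eval_Mn.IH(1) by blast
  obtain Y where Y: "\<forall>m<n. Y m \<noteq> 0 \<and>
      (\<exists>L. derivation (eval_rule orc) L \<and> judg (enc f) (list_encode (m # xs)) (Y m) \<in> set L)"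
    using eval_Mn.IH(2) by metis
  then obtain L2 where L2: "derivation (eval_rule orc) L2"
    "\<forall>m<n. judg (enc f) (list_encode (m # xs)) (Y m) \<in> set L2"
    using derivation_covering[OF mono_rule_eval_rule,
        where n=n and x="\<lambda>m. judg (enc f) (list_encode (m # xs)) (Y m)"] by blast
  have "derivation (eval_rule orc) (L1 @ L2)"
    by (rule derivation_append[OF mono_rule_eval_rule L1(1) L2(1)])
  moreover have "minimize_rule (\<lambda>P. \<exists>e\<in>set (L1 @ L2). P e) (judg (enc (Rmn f)) (list_encode xs) n)"
    by (rule minimize_rule_intro) (use L1(2) L2(2) Y in auto)
  ultimately show ?case by (blast intro: derivation_snoc_mem eval_ruleI)
qed

lemma prog_derivation_complete: "\<exists>L. derivation prog_rule L \<and> enc f \<in> set L"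
proof (induction f)
  case (Rcn f hs)
  obtain L1 where L1: "derivation prog_rule L1" "enc f \<in> set L1" using Rcn.IH(1) by blast
  obtain L2 where L2: "derivation prog_rule L2" "\<forall>i<length hs. enc (hs!i) \<in> set L2"
    using derivation_covering[OF mono_rule_prog_rule, where n="length hs" and x="\<lambda>i. enc (hs!i)"] Rcn.IH(2)
    by (meson nth_mem)
  have "derivation prog_rule (L1 @ L2)"
    by (rule derivation_append[OF mono_rule_prog_rule L1(1) L2(1)])
  moreover have "prog_rule (\<lambda>P. \<exists>e\<in>set (L1 @ L2). P e) (enc (Rcn f hs))"
    unfolding prog_rule_def using L1(2) L2(2)
    by (auto simp: code_length_list_encode code_nth_list_encode)
  ultimately show ?case by (rule derivation_snoc_mem)
next
  case (Rpr f h)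
  obtain L1 L2 where "derivation prog_rule L1" "enc f \<in> set L1" "derivation prog_rule L2"
      "enc h \<in> set L2"
    using Rpr.IH by blast
  then have "derivation prog_rule (L1 @ L2)" "prog_rule (\<lambda>P. \<exists>e\<in>set (L1 @ L2). P e) (enc (Rpr f h))"
    by (simp_all add: derivation_append[OF mono_rule_prog_rule] prog_rule_def)
  then show ?case by (rule derivation_snoc_mem)
next
  case (Rmn f)
  then obtain L where L: "derivation prog_rule L" "enc f \<in> set L" by blast
  then have "prog_rule (\<lambda>P. \<exists>e\<in>set L. P e) (enc (Rmn f))" by (simp add: prog_rule_def)
  then show ?case by (rule derivation_snoc_mem[OF L(1)])
qed (intro derivation_singleton; simp add: prog_rule_def)+

section \<open>Stagewise approximations\<close>

definition derives :: "(nat \<Rightarrow> nat) \<Rightarrow> nat \<Rightarrow> nat \<Rightarrow> nat \<Rightarrow> nat \<Rightarrow> bool" where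
  "derives orc D i c x \<longleftrightarrow> derivation_code (eval_rule orc) D \<and> i < code_length D \<and>
     judg_prog (code_nth D i) = c \<and> judg_args (code_nth D i) = code_cons x 0"

lemma derives_sound: "derives orc D i (enc f) x \<Longrightarrow> eval orc f [x] (judg_val (code_nth D i))"
  using derivation_code_sound[of orc D i f] by (simp add: derives_def)

lemma derives_complete:
  assumes "eval orc f [x] y"
  shows "\<exists>D i. derives orc D i (enc f) x \<and> judg_val (code_nth D i) = y"
proof -
  obtain L where L: "derivation (eval_rule orc) L" "judg (enc f) (list_encode [x]) y \<in> set L"
    using eval_derivation_complete[OF assms] by blast
  obtain i where "i < code_length (list_encode L)"
      "code_nth (list_encode L) i = judg (enc f) (list_encode [x]) y"
    using mem_code_nth_list_encode[OF L(2)] by blast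
  then have "derives orc (list_encode L) i (enc f) x \<and> judg_val (code_nth (list_encode L) i) = y"
    using L(1) by (simp add: derives_def derivation_code_list_encode code_cons_def)
  then show ?thesis by blast
qed

lemma derives_oracle_cong: "\<forall>q<D. orc q = orc' q \<Longrightarrow> derives orc D i c x = derives orc' D i c x"
  unfolding derives_def using derivation_code_oracle_cong by blast

definition halts_within :: "nat \<Rightarrow> nat \<Rightarrow> nat \<Rightarrow> bool" where
  "halts_within c s x \<longleftrightarrow> (\<exists>D<Suc s. \<exists>i<code_length D. derives (\<lambda>_. 0) D i c x)"

lemma decidable_in_halts_within [recursive_in_intros]:
  assumes "recursive_in g n C" "recursive_in g n F" "recursive_in g n G"
  shows "decidable_in g n (\<lambda>xs. halts_within (C xs) (F xs) (G xs))"
proof -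
  have "decidable_in g 3 (\<lambda>xs. halts_within (xs!0) (xs!1) (xs!2))"
    unfolding halts_within_def derives_def by (intro recursive_in_intros; simp)
  then show ?thesis unfolding decidable_in_def by (rule recursive_in_comp_ternary[OF _ assms])
qed

lemma ex_less_Suc_mono: "\<exists>D<Suc s. P D \<Longrightarrow> s \<le> s' \<Longrightarrow> \<exists>D<Suc s'. P D"
  by (metis Suc_le_mono order.strict_trans2)

lemma halts_within_mono: "halts_within c s x \<Longrightarrow> s \<le> s' \<Longrightarrow> halts_within c s' x"
  unfolding halts_within_def by (rule ex_less_Suc_mono)

lemma ex_halts_within_iff: "(\<exists>s. halts_within (enc f) s x) \<longleftrightarrow> (\<exists>y. eval (\<lambda>_. 0) f [x] y)"
proof
  assume "\<exists>s. halts_within (enc f) s x"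
  then show "\<exists>y. eval (\<lambda>_. 0) f [x] y"
    unfolding halts_within_def by (blast dest: derives_sound)
next
  assume "\<exists>y. eval (\<lambda>_. 0) f [x] y"
  then obtain D i where "derives (\<lambda>_. 0) D i (enc f) x" using derives_complete by blast
  then have "halts_within (enc f) D x" unfolding halts_within_def derives_def by blast
  then show "\<exists>s. halts_within (enc f) s x" ..
qed

lemma eventually_iff_if_mono:
  assumes "\<And>s s'. P s \<Longrightarrow> s \<le> s' \<Longrightarrow> P s'" "(\<exists>s. P s) \<longleftrightarrow> Q"
  shows "\<forall>\<^sub>F s in sequentially. P s \<longleftrightarrow> Q"
proof (cases Q)
  case True
  then obtain s0 where "P s0" using assms(2) by blast
  then show ?thesis using True assms(1) by (auto simp: eventually_sequentially)
qed (use assms(2) in auto)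

lemma eventually_halts_within_iff:
  "\<forall>\<^sub>F s in sequentially. halts_within (enc f) s x \<longleftrightarrow> (\<exists>y. eval (\<lambda>_. 0) f [x] y)"
  by (rule eventually_iff_if_mono[OF halts_within_mono ex_halts_within_iff])

definition prog_code_within :: "nat \<Rightarrow> nat \<Rightarrow> bool" where
  "prog_code_within s e \<longleftrightarrow> (\<exists>D<Suc s. derivation_code prog_rule D \<and> (\<exists>i<code_length D. code_nth D i = e))"

definition halting_set_at :: "nat \<Rightarrow> nat set" where
  "halting_set_at s = {e. halts_within e s e \<and> prog_code_within s e}"

lemma recursive_in_chi_halting_set_at: "recursive_in g 2 (\<lambda>xs. chi (halting_set_at (xs!0)) (xs!1))"
  unfolding chi_def halting_set_at_def prog_code_within_def mem_Collect_eq
  by (intro recursive_in_intros; simp)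

lemma prog_code_within_mono: "prog_code_within s e \<Longrightarrow> s \<le> s' \<Longrightarrow> prog_code_within s' e"
  unfolding prog_code_within_def by (rule ex_less_Suc_mono)

lemma halting_set_at_mono: "e \<in> halting_set_at s \<Longrightarrow> s \<le> s' \<Longrightarrow> e \<in> halting_set_at s'"
  unfolding halting_set_at_def by (auto intro: halts_within_mono prog_code_within_mono)

lemma ex_halting_set_at_iff: "(\<exists>s. e \<in> halting_set_at s) \<longleftrightarrow> e \<in> halting_set"
proof
  assume "\<exists>s. e \<in> halting_set_at s"
  then obtain s D i where s: "halts_within e s e" "derivation_code prog_rule D" "i < code_length D"
      "code_nth D i = e"
    unfolding halting_set_at_def prog_code_within_def by blast
  obtain f where f: "enc f = e" using derivation_code_prog_rule_sound[OF s(2,3)] s(4) by blast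
  then show "e \<in> halting_set"
    using s(1) ex_halts_within_iff[of f e] unfolding halting_set_def by blast
next
  assume "e \<in> halting_set"
  then obtain f where f: "enc f = e" "\<exists>y. eval (\<lambda>_. 0) f [e] y" unfolding halting_set_def by blast
  obtain s1 where s1: "halts_within e s1 e" using f ex_halts_within_iff by blast
  obtain L where L: "derivation prog_rule L" "e \<in> set L" using prog_derivation_complete f(1)
    by blast
  have "prog_code_within (list_encode L) e"
    unfolding prog_code_within_def using L mem_code_nth_list_encode
    by (auto simp: derivation_code_list_encode)
  then have "e \<in> halting_set_at (max s1 (list_encode L))"
    using s1 unfolding halting_set_at_def by (auto intro: halts_within_mono prog_code_within_mono)
  then show "\<exists>s. e \<in> halting_set_at s" ..
qed

lemma eventually_all_less:
  fixes N :: nat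
  assumes "\<And>j. j < N \<Longrightarrow> \<forall>\<^sub>F s in F. P s j"
  shows "\<forall>\<^sub>F s in F. \<forall>j<N. P s j"
proof -
  have "\<forall>\<^sub>F s in F. \<forall>j\<in>{..<N}. P s j" using assms by (intro eventually_ball_finite) simp_all
  then show ?thesis by (auto elim: eventually_mono)
qed

lemma eventually_halting_set_at:
  "\<forall>\<^sub>F s in sequentially. \<forall>q<N. chi (halting_set_at s) q = chi halting_set q"
proof (rule eventually_all_less)
  fix q
  have "\<forall>\<^sub>F s in sequentially. q \<in> halting_set_at s \<longleftrightarrow> q \<in> halting_set"
    by (rule eventually_iff_if_mono) (auto intro: halting_set_at_mono simp: ex_halting_set_at_iff)
  then show "\<forall>\<^sub>F s in sequentially. chi (halting_set_at s) q = chi halting_set q"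
    by (auto simp: chi_def elim: eventually_mono)
qed

definition search_derivation :: "(nat \<Rightarrow> nat) \<Rightarrow> nat \<Rightarrow> nat \<Rightarrow> nat \<Rightarrow> nat" where
  "search_derivation orc s c x = (LEAST D. (D < Suc s \<and> (\<exists>i<code_length D. derives orc D i c x)) \<or> D = Suc s)"

definition search_index :: "(nat \<Rightarrow> nat) \<Rightarrow> nat \<Rightarrow> nat \<Rightarrow> nat \<Rightarrow> nat" where
  "search_index orc s c x = (LEAST i. (i < code_length (search_derivation orc s c x) \<and>
      derives orc (search_derivation orc s c x) i c x) \<or> i = code_length (search_derivation orc s c x))"

text \<open>The stage-s guess for the output on x of the program with code c relative to the
  halting set: the first judgment about (c, x) in the least derivation code below s that is correct
  for the stage-s approximation of the halting set.\<close>

definition approx_value :: "nat \<Rightarrow> nat \<Rightarrow> nat \<Rightarrow> nat" where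
  "approx_value c s x = judg_val (code_nth (search_derivation (chi (halting_set_at s)) s c x)
     (search_index (chi (halting_set_at s)) s c x))"

lemma decidable_in_derivation_code_halting_set_at [recursive_in_intros]:
  "recursive_in g n F \<Longrightarrow> recursive_in g n G \<Longrightarrow>
   decidable_in g n (\<lambda>xs. derivation_code (eval_rule (chi (halting_set_at (F xs)))) (G xs))"
  by (rule decidable_in_derivation_code_eval_rule[OF recursive_in_chi_halting_set_at])

lemma recursive_in_search_derivation [recursive_in_intros]:
  assumes "recursive_in g n F" "recursive_in g n G"
  shows "recursive_in g n (\<lambda>xs. search_derivation (chi (halting_set_at (F xs))) (F xs) c (G xs))"
proof -
  have "recursive_in g 2 (\<lambda>xs. search_derivation (chi (halting_set_at (xs!0))) (xs!0) c (xs!1))"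
    unfolding search_derivation_def derives_def by (intro recursive_in_intros; simp) auto
  then show ?thesis by (rule recursive_in_comp_binary[OF _ assms])
qed

lemma recursive_in_approx_value [recursive_in_intros]:
  assumes "recursive_in g n F" "recursive_in g n G"
  shows "recursive_in g n (\<lambda>xs. approx_value c (F xs) (G xs))"
proof -
  have "recursive_in g 2 (\<lambda>xs. search_index (chi (halting_set_at (xs!0))) (xs!0) c (xs!1))"
    unfolding search_index_def derives_def by (intro recursive_in_intros; simp) auto
  then have "recursive_in g 2 (\<lambda>xs. approx_value c (xs!0) (xs!1))"
    unfolding approx_value_def by (intro recursive_in_intros) simp_all
  then show ?thesis by (rule recursive_in_comp_binary[OF _ assms])
qed

lemma search_finds_least:
  assumes "derives orc D0 i c x" "\<And>D i. D < D0 \<Longrightarrow> \<not> derives orc D i c x" "D0 \<le> s"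
  shows "search_derivation orc s c x = D0" "derives orc D0 (search_index orc s c x) c x"
proof -
  show D: "search_derivation orc s c x = D0"
    unfolding search_derivation_def
  proof (rule Least_equality)
    show "(D0 < Suc s \<and> (\<exists>i<code_length D0. derives orc D0 i c x)) \<or> D0 = Suc s"
      using assms(1,3) by (auto simp: derives_def)
  next
    fix D assume "(D < Suc s \<and> (\<exists>i<code_length D. derives orc D i c x)) \<or> D = Suc s"
    then show "D0 \<le> D" using assms(2,3) by (meson le_SucI not_le)
  qed
  define i0 where "i0 = search_index orc s c x"
  have "(i0 < code_length D0 \<and> derives orc D0 i0 c x) \<or> i0 = code_length D0"
    unfolding i0_def search_index_def D by (rule LeastI[of _ "code_length D0"]) simp
  moreover have "i0 \<le> i"
    unfolding i0_def search_index_def D by (rule Least_le) (use assms(1) in \<open>simp add: derives_def\<close>)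
  ultimately show "derives orc D0 i0 c x" using assms(1) by (auto simp: derives_def)
qed

lemma eventually_approx_value:
  assumes "eval (chi halting_set) f [x] y"
  shows "\<forall>\<^sub>F s in sequentially. approx_value (enc f) s x = y"
proof -
  let ?K = "chi halting_set"
  define P where "P D \<longleftrightarrow> (\<exists>i. derives ?K D i (enc f) x)" for D
  have "\<exists>D. P D" using derives_complete[OF assms] unfolding P_def by blast
  define D0 where "D0 = (LEAST D. P D)"
  obtain i0 where i0: "derives ?K D0 i0 (enc f) x"
    using LeastI_ex[OF \<open>\<exists>D. P D\<close>] unfolding D0_def P_def by blast
  have min: "\<not> derives ?K D i (enc f) x" if "D < D0" for D i
    using not_less_Least[OF that[unfolded D0_def]] unfolding P_def by blast
  have "approx_value (enc f) s x = y" if s: "D0 \<le> s" "\<forall>q<D0. chi (halting_set_at s) q = ?K q" for s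
  proof -
    let ?orc = "chi (halting_set_at s)"
    have cong: "derives ?orc D i (enc f) x = derives ?K D i (enc f) x" if "D \<le> D0" for D i
      using derives_oracle_cong s(2) that by (meson less_le_trans)
    have "search_derivation ?orc s (enc f) x = D0"
        "derives ?orc D0 (search_index ?orc s (enc f) x) (enc f) x"
      by (rule search_finds_least[of ?orc D0 i0]; use cong i0 min s(1) in auto)+
    then have "eval ?K f [x] (approx_value (enc f) s x)"
      using cong derives_sound unfolding approx_value_def by auto
    then show ?thesis using eval_deterministic assms by blast
  qed
  moreover have "\<forall>\<^sub>F s in sequentially. D0 \<le> s \<and> (\<forall>q<D0. chi (halting_set_at s) q = ?K q)"
    by (intro eventually_conj eventually_ge_at_top eventually_halting_set_at)
  ultimately show ?thesis by (auto elim: eventually_mono)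
qed

lemma card_Int_plus_card_outside: "card (A \<inter> {0..<N}) + card {x \<in> {..<N}. x \<notin> A} = N"
proof -
  have "card ((A \<inter> {0..<N}) \<union> {x \<in> {..<N}. x \<notin> A}) = card (A \<inter> {0..<N}) + card {x \<in> {..<N}. x \<notin> A}"
    by (rule card_Un_disjoint) auto
  moreover have "(A \<inter> {0..<N}) \<union> {x \<in> {..<N}. x \<notin> A} = {..<N}" by auto
  ultimately show ?thesis by simp
qed

lemma rho_eq: "0 < N \<Longrightarrow> rho N A = 1 - real (card {x \<in> {..<N}. x \<notin> A}) / real N"
  using card_Int_plus_card_outside[of A N] unfolding rho_def
  by (simp add: field_simps flip: of_nat_add)

lemma card_outside_le_if_rho_ge:
  assumes "0 < N" "1 - 1 / 2 ^ k \<le> rho N A"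
  shows "card {x \<in> {..<N}. x \<notin> A} * 2 ^ k \<le> N"
proof -
  have "real (card {x \<in> {..<N}. x \<notin> A}) / real N \<le> 1 / 2 ^ k"
    using assms rho_eq[of N A] by simp
  then have "real (card {x \<in> {..<N}. x \<notin> A} * 2 ^ k) \<le> real N"
    using assms(1) by (simp add: field_simps)
  then show ?thesis by linarith
qed

lemma less_if_bounded_by_const_and_fraction:
  fixes r :: real
  assumes "M * 2 ^ k \<le> C * 2 ^ k + 4 * n" "8 < r * 2 ^ k" "2 * real C < r * real n" "0 < n"
  shows "real M < r * real n"
proof -
  have "real (M * 2 ^ k) \<le> real (C * 2 ^ k + 4 * n)" using assms(1) by (simp only: of_nat_le_iff)
  then have bound: "real M * 2 ^ k \<le> real C * 2 ^ k + 4 * real n" by simp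
  have "2 * real C * 2 ^ k < r * real n * 2 ^ k"
    using assms(3) by (intro mult_strict_right_mono) simp_all
  moreover have "8 * real n < r * 2 ^ k * real n"
    using assms(2,4) by (intro mult_strict_right_mono) simp_all
  ultimately have "real M * 2 ^ k < r * real n * 2 ^ k"
    using bound by (simp only: algebra_simps)
  then show ?thesis by simp
qed

lemma has_density_one_if_outside_bounded:
  assumes "\<And>K. \<exists>C. \<forall>n>0. card {x \<in> {..<n}. x \<notin> B} * 2 ^ K \<le> C * 2 ^ K + 4 * n"
  shows "has_density_one B"
  unfolding has_density_one_def
proof (rule LIMSEQ_I)
  fix r :: real assume r: "r > 0"
  obtain k :: nat where "8 / r < real k" using reals_Archimedean2 by blast
  then have "8 < r * real k" using r by (simp add: field_simps)
  also have "\<dots> < r * 2 ^ k"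
    using r by (metis less_exp mult_strict_left_mono of_nat_less_iff of_nat_numeral of_nat_power)
  finally have k: "8 < r * 2 ^ k" .
  obtain C where C: "\<forall>n>0. card {x \<in> {..<n}. x \<notin> B} * 2 ^ k \<le> C * 2 ^ k + 4 * n"
    using assms by blast
  obtain N0 :: nat where N0: "2 * real C / r < real N0" using reals_Archimedean2 by blast
  show "\<exists>no. \<forall>n\<ge>no. norm (rho n B - 1) < r"
  proof (intro exI allI impI)
    fix n assume n: "n \<ge> Suc N0"
    define M where "M = card {x \<in> {..<n}. x \<notin> B}"
    have "2 * real C < r * real N0" using N0 r by (simp add: field_simps)
    also have "\<dots> \<le> r * real n" using n r by simp
    finally have "real M < r * real n"
      using C n k unfolding M_def by (intro less_if_bounded_by_const_and_fraction) auto
    then have "real M / real n < r" using n by (simp add: divide_less_eq)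
    moreover have "rho n B - 1 = - (real M / real n)" using n rho_eq[of n B] unfolding M_def by simp
    ultimately show "norm (rho n B - 1) < r" by simp
  qed
qed

section \<open>A computable subset of density one from a witness below the halting set\<close>

definition block_end :: "nat \<Rightarrow> nat" where "block_end m = 2 ^ Suc m"

definition block :: "nat \<Rightarrow> nat" where "block x = (LEAST m. x < block_end m)"

definition missing :: "nat \<Rightarrow> nat \<Rightarrow> nat \<Rightarrow> nat" where
  "missing ca s m = (\<Sum>x<block_end m. if \<not> halts_within ca s x then 1 else 0)"

definition stage_ok :: "nat \<Rightarrow> nat \<Rightarrow> nat \<Rightarrow> nat \<Rightarrow> bool" where
  "stage_ok ca cw m s \<longleftrightarrow> m \<le> s \<and>
     (\<forall>k<Suc m. (\<forall>j<Suc k. approx_value cw s j \<le> block_end m) \<longrightarrow> missing ca s m * 2 ^ k \<le> block_end m)"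

definition stage :: "nat \<Rightarrow> nat \<Rightarrow> nat \<Rightarrow> nat" where
  "stage ca cw m = (LEAST s. stage_ok ca cw m s)"

definition dense_subset :: "nat \<Rightarrow> nat \<Rightarrow> nat set" where
  "dense_subset ca cw = {x. halts_within ca (stage ca cw (block x)) x}"

lemma missing_eq_card: "missing ca s m = card {x \<in> {..<block_end m}. \<not> halts_within ca s x}"
  unfolding missing_def by (simp add: sum.inter_filter[symmetric])

lemma less_block_end: "m < block_end m"
  using less_exp[of "Suc m"] unfolding block_end_def by simp

lemma less_block_end_block: "x < block_end (block x)"
  unfolding block_def by (rule LeastI[of _ x]) (rule less_block_end)

lemma block_mono: "x \<le> y \<Longrightarrow> block x \<le> block y"
  using less_block_end_block[of y] unfolding block_def by (intro Least_le) simp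

lemma power_block_le: "0 < n \<Longrightarrow> 2 ^ block (n - 1) \<le> n"
proof (cases "block (n - 1)")
  case (Suc m)
  then have "\<not> n - 1 < block_end m" unfolding block_def by (metis lessI not_less_Least)
  then show "0 < n \<Longrightarrow> ?thesis" using Suc unfolding block_end_def by simp
qed simp

lemma sum_block_end: "(\<Sum>m<N. block_end m) + 2 = 2 * 2 ^ N"
  by (induction N) (auto simp: block_end_def)

lemma computable_dense_subset:
  assumes "\<And>m. \<exists>s. stage_ok ca cw m s"
  shows "computable_set (dense_subset ca cw)"
proof -
  have stage: "recursive_in g 1 (\<lambda>xs. stage ca cw (xs!0))" for g
    unfolding stage_def
  proof (rule recursive_in_Least)
    show "decidable_in g (Suc 1) (\<lambda>ys. stage_ok ca cw (tl ys ! 0) (hd ys))"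
      unfolding stage_ok_def missing_def block_end_def by (intro recursive_in_intros; simp)
  qed (use assms in blast)
  have block: "recursive_in g 1 (\<lambda>xs. block (xs!0))" for g
    unfolding block_def
  proof (rule recursive_in_Least)
    show "decidable_in g (Suc 1) (\<lambda>ys. tl ys ! 0 < block_end (hd ys))"
      unfolding block_end_def by (intro recursive_in_intros; simp)
  qed (use less_block_end in blast)
  have "recursive_in (\<lambda>_. 0) 1 (\<lambda>xs. chi (dense_subset ca cw) (xs!0))"
    unfolding chi_def dense_subset_def mem_Collect_eq
    by (intro recursive_in_intros recursive_in_comp_unary[OF stage] recursive_in_comp_unary[OF block]; simp)
  then show ?thesis
    unfolding computable_set_def computable_def recursive_in_unary_iff_computable_rel .
qed

lemma card_outside_dense_subset_le:
  assumes "0 < n"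
  shows "card {x \<in> {..<n}. x \<notin> dense_subset ca cw} \<le>
    (\<Sum>m<Suc (block (n - 1)). missing ca (stage ca cw m) m)"
proof -
  let ?U = "\<Union>m<Suc (block (n - 1)). {x \<in> {..<block_end m}. \<not> halts_within ca (stage ca cw m) x}"
  have "{x \<in> {..<n}. x \<notin> dense_subset ca cw} \<subseteq> ?U"
  proof
    fix x assume "x \<in> {x \<in> {..<n}. x \<notin> dense_subset ca cw}"
    then have "x < n" "\<not> halts_within ca (stage ca cw (block x)) x" by (auto simp: dense_subset_def)
    moreover have "block x \<le> block (n - 1)" using \<open>x < n\<close> by (intro block_mono) simp
    ultimately show "x \<in> ?U" using less_block_end_block[of x] by auto
  qed
  then have "card {x \<in> {..<n}. x \<notin> dense_subset ca cw} \<le> card ?U" by (intro card_mono) auto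
  also have "\<dots> \<le> (\<Sum>m<Suc (block (n - 1)). card {x \<in> {..<block_end m}. \<not> halts_within ca (stage ca cw m) x})"
    by (rule card_UN_le) simp
  finally show ?thesis by (simp add: missing_eq_card)
qed

text \<open>The blocks below m0 contribute a constant; all others together miss at most their total
  length times 2^-K, a geometric sum bounded by 4 n 2^-K.\<close>

lemma outside_dense_subset_bounded:
  assumes "\<exists>m0. \<forall>m\<ge>m0. missing ca (stage ca cw m) m * 2 ^ K \<le> block_end m"
  shows "\<exists>C. \<forall>n>0. card {x \<in> {..<n}. x \<notin> dense_subset ca cw} * 2 ^ K \<le> C * 2 ^ K + 4 * n"
proof -
  define ms where "ms m = missing ca (stage ca cw m) m" for m
  obtain m0 where m0: "\<forall>m\<ge>m0. ms m * 2 ^ K \<le> block_end m" using assms unfolding ms_def by blast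
  define C where "C = (\<Sum>m<m0. ms m)"
  have "card {x \<in> {..<n}. x \<notin> dense_subset ca cw} * 2 ^ K \<le> C * 2 ^ K + 4 * n" if n: "n > 0" for n
  proof -
    define M where "M = block (n - 1)"
    have "card {x \<in> {..<n}. x \<notin> dense_subset ca cw} * 2 ^ K \<le> (\<Sum>m<Suc M. ms m * 2 ^ K)"
      using card_outside_dense_subset_le[OF n] unfolding M_def ms_def sum_distrib_right[symmetric]
      by simp
    also have "\<dots> \<le> (\<Sum>m<Suc M. (if m < m0 then ms m * 2 ^ K else 0) + block_end m)"
      by (rule sum_mono) (use m0 in auto)
    also have "\<dots> = (\<Sum>m\<in>{m \<in> {..<Suc M}. m < m0}. ms m * 2 ^ K) + (\<Sum>m<Suc M. block_end m)"
      by (simp add: sum.distrib sum.inter_filter[symmetric] del: sum.lessThan_Suc)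
    also have "\<dots> \<le> C * 2 ^ K + 4 * 2 ^ M"
    proof (rule add_mono)
      show "(\<Sum>m\<in>{m \<in> {..<Suc M}. m < m0}. ms m * 2 ^ K) \<le> C * 2 ^ K"
        unfolding C_def sum_distrib_right by (rule sum_mono2) auto
      show "(\<Sum>m<Suc M. block_end m) \<le> 4 * 2 ^ M" using sum_block_end[of "Suc M"] by simp
    qed
    also have "\<dots> \<le> C * 2 ^ K + 4 * n" using power_block_le[OF n] unfolding M_def by simp
    finally show ?thesis .
  qed
  then show ?thesis by blast
qed

context
  fixes A :: "nat set" and w :: "nat \<Rightarrow> nat" and a fw :: recf
  assumes enum: "\<And>x. x \<in> A \<longleftrightarrow> (\<exists>y. eval (\<lambda>_. 0) a [x] y)"
    and witness_prog: "\<And>j. eval (chi halting_set) fw [j] (w j)"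
    and witness: "witnesses_density_one w A"
begin

lemma dense_subset_subset: "dense_subset (enc a) (enc fw) \<subseteq> A"
  using enum ex_halts_within_iff unfolding dense_subset_def by blast

lemma eventually_approx_value_below:
  "\<forall>\<^sub>F s in sequentially. \<forall>j<N. approx_value (enc fw) s j = w j"
  by (intro eventually_all_less eventually_approx_value witness_prog)

lemma eventually_stage_ok: "\<forall>\<^sub>F s in sequentially. stage_ok (enc a) (enc fw) m s"
proof -
  have "\<forall>\<^sub>F s in sequentially. \<forall>x<block_end m. halts_within (enc a) s x \<longleftrightarrow> x \<in> A"
    using eventually_halts_within_iff enum by (intro eventually_all_less) simp
  then have "\<forall>\<^sub>F s in sequentially. m \<le> s \<and> (\<forall>j<Suc m. approx_value (enc fw) s j = w j) \<and>
      (\<forall>x<block_end m. halts_within (enc a) s x \<longleftrightarrow> x \<in> A)"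
    by (intro eventually_conj eventually_ge_at_top eventually_approx_value_below)
  then show ?thesis
  proof (rule eventually_mono, elim conjE)
    fix s assume s: "m \<le> s" "\<forall>j<Suc m. approx_value (enc fw) s j = w j"
      "\<forall>x<block_end m. halts_within (enc a) s x \<longleftrightarrow> x \<in> A"
    have "missing (enc a) s m * 2 ^ k \<le> block_end m"
      if "k < Suc m" "approx_value (enc fw) s k \<le> block_end m" for k
    proof -
      have "1 - 1 / 2 ^ k \<le> rho (block_end m) A"
        using witness that s(2) unfolding witnesses_density_one_def block_end_def by simp
      moreover have "{x \<in> {..<block_end m}. \<not> halts_within (enc a) s x} = {x \<in> {..<block_end m}. x \<notin> A}"
        using s(3) by auto
      ultimately show ?thesis
        using card_outside_le_if_rho_ge[of "block_end m" k A] unfolding missing_eq_card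
        by (simp add: block_end_def)
    qed
    then show "stage_ok (enc a) (enc fw) m s" unfolding stage_ok_def using s(1) by auto
  qed
qed

lemma ex_stage_ok: "\<exists>s. stage_ok (enc a) (enc fw) m s"
  using eventually_stage_ok[of m] by (auto simp: eventually_sequentially)

lemma eventually_missing_small:
  "\<exists>m0. \<forall>m\<ge>m0. missing (enc a) (stage (enc a) (enc fw) m) m * 2 ^ K \<le> block_end m"
proof -
  obtain S where S: "\<forall>s\<ge>S. \<forall>j<Suc K. approx_value (enc fw) s j = w j"
    using eventually_approx_value_below[of "Suc K"] by (auto simp: eventually_sequentially)
  define m0 where "m0 = max K (max S (\<Sum>j<Suc K. w j))"
  have "missing (enc a) (stage (enc a) (enc fw) m) m * 2 ^ K \<le> block_end m" if m: "m \<ge> m0" for m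
  proof -
    let ?s = "stage (enc a) (enc fw) m"
    have ok: "stage_ok (enc a) (enc fw) m ?s"
      unfolding stage_def by (rule LeastI_ex) (rule ex_stage_ok)
    have "approx_value (enc fw) ?s j \<le> block_end m" if j: "j < Suc K" for j
    proof -
      have "approx_value (enc fw) ?s j = w j" using S j ok m unfolding m0_def stage_ok_def by auto
      also have "\<dots> \<le> (\<Sum>j<Suc K. w j)" using j by (intro member_le_sum) auto
      also have "\<dots> < block_end m" using m less_block_end[of m] unfolding m0_def by linarith
      finally show ?thesis by simp
    qed
    then show ?thesis using ok m unfolding stage_ok_def m0_def by auto
  qed
  then show ?thesis by blast
qed

lemma dense_subset_properties:
  "dense_subset (enc a) (enc fw) \<subseteq> A \<and> computable_set (dense_subset (enc a) (enc fw)) \<and>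
   has_density_one (dense_subset (enc a) (enc fw))"
  using dense_subset_subset computable_dense_subset[OF ex_stage_ok]
    has_density_one_if_outside_bounded[OF outside_dense_subset_bounded[OF eventually_missing_small]]
  by blast

end

section \<open>A witness below the halting set from a computable subset of density one\<close>

lemma enc_inj: "enc f = enc g \<Longrightarrow> f = g"
proof (induction f arbitrary: g)
  case (Rcn f hs)
  obtain f' hs' where g: "g = Rcn f' hs'" and "enc f = enc f'" and hs: "map enc hs = map enc hs'"
    using Rcn.prems by (cases g) (auto simp: list_encode_eq)
  moreover have "hs = hs'"
    using hs Rcn.IH(2) by (induction hs arbitrary: hs') (auto simp: Cons_eq_map_conv)
  ultimately show ?case using Rcn.IH(1) by simp
qed (case_tac g; auto)+

definition count_in :: "nat set \<Rightarrow> nat \<Rightarrow> nat" where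
  "count_in B N = (\<Sum>x<N. chi B x)"

definition deficient :: "nat set \<Rightarrow> nat \<Rightarrow> nat \<Rightarrow> bool" where
  "deficient B N k \<longleftrightarrow> 0 < N \<and> 2 ^ k * count_in B N + N < 2 ^ k * N"

lemma count_in_eq_card: "count_in B N = card (B \<inter> {0..<N})"
proof -
  have "count_in B N = card {x \<in> {..<N}. x \<in> B}"
    unfolding count_in_def chi_def by (simp add: sum.inter_filter[symmetric])
  also have "{x \<in> {..<N}. x \<in> B} = B \<inter> {0..<N}" by auto
  finally show ?thesis .
qed

lemma deficient_iff: "deficient B N k \<longleftrightarrow> 0 < N \<and> rho N B < 1 - 1 / 2 ^ k"
proof (cases "0 < N")
  case True
  have "2 ^ k * count_in B N + N < 2 ^ k * N \<longleftrightarrow> real (2 ^ k * count_in B N + N) < real (2 ^ k * N)"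
    by (simp only: of_nat_less_iff)
  also have "\<dots> \<longleftrightarrow> 2 ^ k * real (count_in B N) + real N < 2 ^ k * real N" by simp
  also have "\<dots> \<longleftrightarrow> real (count_in B N) / real N < 1 - 1 / 2 ^ k"
    using True by (simp add: field_simps)
  finally show ?thesis unfolding deficient_def rho_def count_in_eq_card using True by simp
qed (simp add: deficient_def)

lemma eventually_not_deficient:
  assumes "has_density_one B"
  shows "\<exists>m. \<forall>N\<ge>m. \<not> deficient B N k"
proof -
  have "(1::real) / 2 ^ k > 0" by simp
  from LIMSEQ_D[OF assms[unfolded has_density_one_def] this]
  obtain m where "\<forall>n\<ge>m. norm (rho n B - 1) < 1 / 2 ^ k" by blast
  then show ?thesis unfolding deficient_iff by fastforce
qed

text \<open>When p decides deficiency of B, this program halts (on any input) iff B is deficient at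
  some N \<ge> m for precision k.\<close>

definition deficiency_search :: "recf \<Rightarrow> nat \<Rightarrow> nat \<Rightarrow> recf" where
  "deficiency_search p m k = Rcn (Rmn p) [const_prog m, const_prog k]"

context
  fixes B :: "nat set" and p :: recf
  assumes p: "\<And>xs. length xs = 3 \<Longrightarrow>
    eval (\<lambda>_. 0) p xs (if deficient B (xs!0 + xs!1) (xs!2) then 0 else 1)"
begin

lemma eval_deficiency_search_imp:
  assumes "eval (\<lambda>_. 0) (deficiency_search p m k) [e] y"
  shows "deficient B (y + m) k"
proof -
  obtain ys where ys: "length ys = length [const_prog m, const_prog k]"
    "\<forall>i<length [const_prog m, const_prog k]. eval (\<lambda>_. 0) ([const_prog m, const_prog k] ! i) [e] (ys ! i)"
    "eval (\<lambda>_. 0) (Rmn p) ys y"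
    using assms unfolding deficiency_search_def by (erule eval_RcnE)
  have "ys ! 0 = m" "ys ! 1 = k"
    using ys(2) eval_const_prog eval_deterministic
    by (metis length_Cons list.size(3) nth_Cons_0 nth_Cons_Suc
        zero_less_Suc One_nat_def lessI)+
  then have "ys = [m, k]" using ys(1) by (cases ys; cases "tl ys") auto
  with ys(3) have "eval (\<lambda>_. 0) p [y, m, k] 0" by (cases rule: eval_RmnE) auto
  moreover have "eval (\<lambda>_. 0) p [y, m, k] (if deficient B (y + m) k then 0 else 1)"
    using p[of "[y, m, k]"] by simp
  ultimately have "(if deficient B (y + m) k then 0 else 1) = (0::nat)" using eval_deterministic
    by metis
  then show ?thesis by (metis zero_neq_one)
qed

lemma eval_deficiency_search_if:
  assumes "deficient B (n + m) k"
  shows "\<exists>y. eval (\<lambda>_. 0) (deficiency_search p m k) [e] y"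
proof -
  define n0 where "n0 = (LEAST n. deficient B (n + m) k)"
  have "deficient B (n0 + m) k" unfolding n0_def using assms by (rule LeastI)
  then have "eval (\<lambda>_. 0) p (n0 # [m, k]) 0" using p[of "[n0, m, k]"] by simp
  moreover have "\<exists>y. eval (\<lambda>_. 0) p (n # [m, k]) y \<and> y \<noteq> 0" if "n < n0" for n
    using not_less_Least[OF that[unfolded n0_def]] p[of "[n, m, k]"] by auto
  ultimately have "eval (\<lambda>_. 0) (Rmn p) [m, k] n0" by (intro eval_Mn) auto
  then have "eval (\<lambda>_. 0) (deficiency_search p m k) [e] n0"
    unfolding deficiency_search_def
    by (rule eval_Cn[where ys="[m, k]", rotated 2]) (auto simp: less_Suc_eq eval_const_prog)
  then show ?thesis ..
qed

lemma deficiency_search_in_halting_set: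
  "enc (deficiency_search p m k) \<in> halting_set \<longleftrightarrow> (\<exists>n. deficient B (n + m) k)"
proof -
  have "enc (deficiency_search p m k) \<in> halting_set \<longleftrightarrow>
      (\<exists>y. eval (\<lambda>_. 0) (deficiency_search p m k) [enc (deficiency_search p m k)] y)"
    unfolding halting_set_def by (auto dest: enc_inj)
  then show ?thesis using eval_deficiency_search_imp eval_deficiency_search_if by blast
qed

end

definition const_prog_code :: "nat \<Rightarrow> nat" where
  "const_prog_code m = ((\<lambda>c. prod_encode (3, prod_encode (enc Rs, code_cons c 0))) ^^ m) (enc Rz)"

lemma enc_const_prog: "enc (const_prog m) = const_prog_code m"
  by (induction m) (auto simp: const_prog_code_def code_cons_def)

lemma recursive_in_const_prog_code [recursive_in_intros]:
  "recursive_in g n F \<Longrightarrow> recursive_in g n (\<lambda>xs. const_prog_code (F xs))"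
  unfolding const_prog_code_def by (intro recursive_in_intros; simp)

lemma enc_deficiency_search: "enc (deficiency_search p m k) =
    prod_encode (3, prod_encode (enc (Rmn p), code_cons (const_prog_code m) (code_cons (const_prog_code k) 0)))"
  by (simp add: deficiency_search_def enc_const_prog code_cons_def)

lemma non_deficiency_bound_below_halting_set:
  assumes "computable_set B" "has_density_one B"
  shows "\<exists>w. turing_le w halting_set \<and> (\<forall>k N. w k \<le> N \<longrightarrow> \<not> deficient B N k)"
proof -
  have chi_B: "recursive_in (\<lambda>_. 0) 1 (\<lambda>xs. chi B (xs!0))"
    using assms(1) unfolding computable_set_def computable_def recursive_in_unary_iff_computable_rel .
  have "recursive_in (\<lambda>_. 0) 3 (\<lambda>xs. if deficient B (xs!0 + xs!1) (xs!2) then 0 else 1)"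
    unfolding deficient_def count_in_def
    by (intro recursive_in_intros recursive_in_comp_unary[OF chi_B]; simp)
  then obtain p where p: "\<And>xs. length xs = 3 \<Longrightarrow>
      eval (\<lambda>_. 0) p xs (if deficient B (xs!0 + xs!1) (xs!2) then 0 else 1)"
    unfolding recursive_in_def by blast
  have search: "chi halting_set (enc (deficiency_search p m k)) = 0 \<longleftrightarrow> (\<forall>n. \<not> deficient B (n + m) k)" for m k
    using deficiency_search_in_halting_set[OF p, of m k] by (simp add: chi_def)
  define w where "w k = (LEAST m. chi halting_set (enc (deficiency_search p m k)) = 0)" for k
  have ex: "\<exists>m. chi halting_set (enc (deficiency_search p m k)) = 0" for k
  proof -
    obtain m where "\<forall>N\<ge>m. \<not> deficient B N k" using eventually_not_deficient[OF assms(2)] by blast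
    then show ?thesis using search by (metis le_add2)
  qed
  have "recursive_in (chi halting_set) 1 (\<lambda>xs. w (xs!0))"
    unfolding w_def enc_deficiency_search
  proof (rule recursive_in_Least)
    show "decidable_in (chi halting_set) (Suc 1) (\<lambda>ys. chi halting_set (prod_encode (3, prod_encode (enc (Rmn p),
        code_cons (const_prog_code (hd ys)) (code_cons (const_prog_code (tl ys ! 0)) 0)))) = 0)"
      by (intro recursive_in_intros; simp)
  qed (use ex in \<open>simp add: enc_deficiency_search\<close>)
  then have "turing_le w halting_set"
    unfolding turing_le_def recursive_in_unary_iff_computable_rel .
  moreover have "\<not> deficient B N k" if "w k \<le> N" for k N
  proof -
    have "chi halting_set (enc (deficiency_search p (w k) k)) = 0"
      unfolding w_def by (rule LeastI_ex) (rule ex)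
    then show ?thesis using search that by (metis le_add_diff_inverse2)
  qed
  ultimately show ?thesis by blast
qed

lemma witnesses_density_one_if_subset:
  assumes "B \<subseteq> A" "\<forall>k N. w k \<le> N \<longrightarrow> \<not> deficient B N k"
  shows "witnesses_density_one w A"
  unfolding witnesses_density_one_def
proof (intro allI impI)
  fix k n :: nat assume n: "0 < n" "w k \<le> n"
  then have "1 - 1 / 2 ^ k \<le> rho n B" using assms(2) unfolding deficient_iff by fastforce
  also have "\<dots> \<le> rho n A"
    unfolding rho_def using assms(1) by (intro divide_right_mono) (auto intro: card_mono)
  finally show "1 - 1 / 2 ^ k \<le> rho n A" .
qed

theorem mainTheorem12:
  fixes A :: "nat set"
  assumes "ce A" and "has_density_one A"
  shows "(\<exists>B. B \<subseteq> A \<and> computable_set B \<and> has_density_one B) \<longleftrightarrow>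
         (\<exists>w. turing_le w halting_set \<and> witnesses_density_one w A)"
proof
  assume "\<exists>B. B \<subseteq> A \<and> computable_set B \<and> has_density_one B"
  then obtain B where "B \<subseteq> A" "computable_set B" "has_density_one B" by blast
  then show "\<exists>w. turing_le w halting_set \<and> witnesses_density_one w A"
    using non_deficiency_bound_below_halting_set witnesses_density_one_if_subset by blast
next
  assume "\<exists>w. turing_le w halting_set \<and> witnesses_density_one w A"
  then obtain w fw where fw: "\<And>j. eval (chi halting_set) fw [j] (w j)" and w: "witnesses_density_one w A"
    unfolding turing_le_def computable_rel_def by blast
  obtain a where a: "\<And>x. x \<in> A \<longleftrightarrow> (\<exists>y. eval (\<lambda>_. 0) a [x] y)"
    using assms(1) unfolding ce_def by blast
  show "\<exists>B. B \<subseteq> A \<and> computable_set B \<and> has_density_one B"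
    using dense_subset_properties[OF a fw w] by blast
qed

end
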